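(* Fix a real number $\beta>-1$ and let $\phi$ be an analytic self-map of $\mathbb{D}$ such that the composition operator $C_\phi f=f\circ\phi$ is complex symmetric on $A^2_\beta$. Then neither $C_\phi$ nor $C_\phi^*$ is hypercyclic.
   Context: $\mathbb{D}$ is the open unit disc. For $\beta>-1$, $A^2_\beta$ is the Hilbert space of analytic functions $f(z)=\sum_{n\ge0}\widehat f(n)z^n$ on $\mathbb{D}$ with inner product $\langle f,g\rangle=\sum_{n\ge0}\frac{n!\,\Gamma(2+\beta)}{\Gamma(n+2+\beta)}\widehat f(n)\overline{\widehat g(n)}$ (equivalently the $L^2$ inner product with respect to $(\beta+1)(1-|z|^2)^\beta dA(z)$). A conjugation is a conjugate-linear map $C$ with $C^2=I$ and $\langle Cf,Cg\rangle=\langle g,f\rangle$; a bounded operator $T$ is complex symmetric if $CT=T^*C$ for some conjugation $C$. An operator $T$ on a Hilbert space $\mathcal H$ is hypercyclic if there is $f\in\mathcal H$ whose orbit $\{T^nf:n\ge0\}$ is dense in $\mathcal H$. *)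

theory Defs
  imports "HOL-Analysis.Analysis"
begin

text \<open>Elements of the weighted Bergman space A^2_beta are represented by their
Taylor coefficient sequences f(z) = sum_n a n * z^n.\<close>

definition A2_weight :: "real \<Rightarrow> nat \<Rightarrow> real" where
  "A2_weight \<beta> n = fact n * Gamma (2 + \<beta>) / Gamma (real n + 2 + \<beta>)"

definition A2 :: "real \<Rightarrow> (nat \<Rightarrow> complex) set" where
  "A2 \<beta> = {a. summable (\<lambda>n. A2_weight \<beta> n * (cmod (a n))\<^sup>2)}"

definition A2_inner :: "real \<Rightarrow> (nat \<Rightarrow> complex) \<Rightarrow> (nat \<Rightarrow> complex) \<Rightarrow> complex" where
  "A2_inner \<beta> a b = (\<Sum>n. complex_of_real (A2_weight \<beta> n) * a n * cnj (b n))"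

definition A2_norm :: "real \<Rightarrow> (nat \<Rightarrow> complex) \<Rightarrow> real" where
  "A2_norm \<beta> a = sqrt (\<Sum>n. A2_weight \<beta> n * (cmod (a n))\<^sup>2)"

definition as_fun :: "(nat \<Rightarrow> complex) \<Rightarrow> complex \<Rightarrow> complex" where
  "as_fun a z = (\<Sum>n. a n * z ^ n)"

definition taylor_coeffs :: "(complex \<Rightarrow> complex) \<Rightarrow> nat \<Rightarrow> complex" where
  "taylor_coeffs f n = (deriv ^^ n) f 0 / fact n"

definition comp_op :: "(complex \<Rightarrow> complex) \<Rightarrow> (nat \<Rightarrow> complex) \<Rightarrow> (nat \<Rightarrow> complex)" where
  "comp_op \<phi> a = taylor_coeffs (\<lambda>z. as_fun a (\<phi> z))"

definition A2_adjoint :: "real \<Rightarrow> ((nat \<Rightarrow> complex) \<Rightarrow> (nat \<Rightarrow> complex)) \<Rightarrow> (nat \<Rightarrow> complex) \<Rightarrow> (nat \<Rightarrow> complex)" where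
  "A2_adjoint \<beta> T f = (THE h. h \<in> A2 \<beta> \<and> (\<forall>g\<in>A2 \<beta>. A2_inner \<beta> h g = A2_inner \<beta> f (T g)))"

definition A2_conjugation :: "real \<Rightarrow> ((nat \<Rightarrow> complex) \<Rightarrow> (nat \<Rightarrow> complex)) \<Rightarrow> bool" where
  "A2_conjugation \<beta> C \<longleftrightarrow>
     (\<forall>f\<in>A2 \<beta>. C f \<in> A2 \<beta>) \<and>
     (\<forall>f\<in>A2 \<beta>. \<forall>g\<in>A2 \<beta>. C (\<lambda>n. f n + g n) = (\<lambda>n. C f n + C g n)) \<and>
     (\<forall>c. \<forall>f\<in>A2 \<beta>. C (\<lambda>n. c * f n) = (\<lambda>n. cnj c * C f n)) \<and>
     (\<forall>f\<in>A2 \<beta>. C (C f) = f) \<and>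
     (\<forall>f\<in>A2 \<beta>. \<forall>g\<in>A2 \<beta>. A2_inner \<beta> (C f) (C g) = A2_inner \<beta> g f)"

definition A2_complex_symmetric :: "real \<Rightarrow> ((nat \<Rightarrow> complex) \<Rightarrow> (nat \<Rightarrow> complex)) \<Rightarrow> bool" where
  "A2_complex_symmetric \<beta> T \<longleftrightarrow>
     (\<exists>C. A2_conjugation \<beta> C \<and> (\<forall>f\<in>A2 \<beta>. C (T f) = A2_adjoint \<beta> T (C f)))"

definition A2_hypercyclic :: "real \<Rightarrow> ((nat \<Rightarrow> complex) \<Rightarrow> (nat \<Rightarrow> complex)) \<Rightarrow> bool" where
  "A2_hypercyclic \<beta> T \<longleftrightarrow>
     (\<exists>f\<in>A2 \<beta>. \<forall>g\<in>A2 \<beta>. \<forall>e>0. \<exists>n. A2_norm \<beta> (\<lambda>k. (T ^^ n) f k - g k) < e)"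

end

theory Submission
  imports Defs "HOL-Complex_Analysis.Complex_Analysis"
begin

text \<open>
  C_\<phi> fixes the constant function 1, so complex symmetry C C_\<phi> = C_\<phi>^* C makes x = C 1 a
  nonzero fixed vector of C_\<phi>^*, i.e. the functional g \<mapsto> \<langle>x, g\<rangle> is invariant under C_\<phi>.
  Along an orbit this functional is constant, so the orbit keeps distance at least \<parallel>x\<parallel> from
  f + x and C_\<phi> is not hypercyclic; since C is an antilinear isometry intertwining C_\<phi> and
  C_\<phi>^*, neither is C_\<phi>^*. The analytic input is that C_\<phi> maps A^2_beta into itself, by
  Littlewood subordination on circles, a Schwarz-Pick estimate, and integration against the
  density (1 - s)^beta, whose moments are the weights of A^2_beta.
\<close>

section \<open>Integrals over circles\<close>

definition cis2pi :: "real \<Rightarrow> complex" where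
  "cis2pi t = exp (2 * of_real pi * \<i> * of_real t)"

lemma norm_cis2pi [simp]: "norm (cis2pi t) = 1"
  unfolding cis2pi_def by (simp add: norm_exp_eq_Re)

lemma cis2pi_nonzero [simp]: "cis2pi t \<noteq> 0"
  unfolding cis2pi_def by simp

lemma cis2pi_mult_cnj [simp]: "cis2pi t * cnj (cis2pi t) = 1" "cnj (cis2pi t) * cis2pi t = 1"
  using complex_norm_square[of "cis2pi t"] by (simp_all add: mult.commute)

lemma norm_of_real_mult_cis2pi [simp]: "norm (of_real R * cis2pi t) = \<bar>R\<bar>"
  by (simp add: norm_mult)

lemma cis2pi_power_mult_cnj [simp]: "cis2pi t ^ m * cnj (cis2pi t) ^ m = 1"
  by (metis cis2pi_mult_cnj(1) power_mult_distrib power_one)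

lemma continuous_on_cis2pi [continuous_intros]:
  "continuous_on S f \<Longrightarrow> continuous_on S (\<lambda>x. cis2pi (f x))"
  unfolding cis2pi_def by (intro continuous_intros)

lemma continuous_on_circle: "continuous_on S (\<lambda>t. of_real r * cis2pi t)"
  by (intro continuous_intros)

lemma circlepath_eq_cis2pi: "circlepath 0 r t = of_real r * cis2pi t"
  by (simp add: circlepath cis2pi_def)

lemma vector_derivative_circlepath_cis2pi:
  "vector_derivative (circlepath 0 r) (at t) = 2 * of_real pi * \<i> * of_real r * cis2pi t"
  by (simp add: vector_derivative_circlepath cis2pi_def)

lemma has_integral_cnj: "(f has_integral I) S \<Longrightarrow> ((\<lambda>x. cnj (f x)) has_integral cnj I) S"
  using has_integral_linear[OF _ bounded_linear_cnj] by (simp add: o_def)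

lemma has_integral_Re: "(f has_integral I) S \<Longrightarrow> ((\<lambda>x. Re (f x)) has_integral Re I) S"
  using has_integral_linear[OF _ bounded_linear_Re] by (simp add: o_def)

lemma has_contour_integral_circlepath_cis2pi:
  assumes "(f has_contour_integral I) (circlepath 0 r)"
  shows "((\<lambda>t. f (of_real r * cis2pi t) * of_real r * cis2pi t) has_integral I / (2 * of_real pi * \<i>)) {0..1}"
proof -
  have "((\<lambda>t. (2 * of_real pi * \<i>) * (f (of_real r * cis2pi t) * of_real r * cis2pi t)) has_integral I) {0..1}"
    using assms unfolding has_contour_integral
    by (simp add: circlepath_eq_cis2pi vector_derivative_circlepath_cis2pi mult_ac)
  from has_integral_mult_right[OF this, of "1 / (2 * of_real pi * \<i>)"] show ?thesis
    by (simp add: field_simps)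
qed

lemma holomorphic_circle_mean:
  assumes "continuous_on (cball 0 r) g" "g holomorphic_on ball 0 r" "r > 0"
  shows "((\<lambda>t. g (of_real r * cis2pi t)) has_integral g 0) {0..1}"
proof -
  have "((\<lambda>u. g u / (u - 0)) has_contour_integral (2 * of_real pi * \<i> * g 0)) (circlepath 0 r)"
    by (rule Cauchy_integral_circlepath) (use assms in auto)
  from has_contour_integral_circlepath_cis2pi[OF this] show ?thesis
    using assms(3) by simp
qed

lemma taylor_coeffs_circle_integral:
  assumes "h holomorphic_on ball 0 1" "0 < r" "r < 1"
  shows "((\<lambda>t. h (of_real r * cis2pi t) * cnj (cis2pi t) ^ m) has_integral taylor_coeffs h m * of_real r ^ m) {0..1}"
proof -
  have cont: "continuous_on (cball 0 r) h"
    by (rule holomorphic_on_imp_continuous_on, rule holomorphic_on_subset[OF assms(1)]) (use assms in auto)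
  have hol: "h holomorphic_on ball 0 r"
    by (rule holomorphic_on_subset[OF assms(1)]) (use assms in auto)
  have "((\<lambda>u. h u / (u - 0) ^ Suc m) has_contour_integral
                     (2 * pi * \<i>) / fact m * (deriv ^^ m) h 0) (circlepath 0 r)"
    by (rule Cauchy_has_contour_integral_higher_derivative_circlepath[OF cont hol]) (use assms in auto)
  from has_integral_mult_right[OF has_contour_integral_circlepath_cis2pi[OF this], of "of_real r ^ m"]
  have "((\<lambda>t. of_real r ^ m * (h (of_real r * cis2pi t) / (of_real r * cis2pi t) ^ Suc m * of_real r * cis2pi t))
          has_integral taylor_coeffs h m * of_real r ^ m) {0..1}"
    by (simp add: taylor_coeffs_def mult_ac)
  moreover have "of_real r ^ m * (H / (of_real r * cis2pi t) ^ Suc m * of_real r * cis2pi t) = H * cnj (cis2pi t) ^ m"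
    for H t
  proof -
    have "cnj (cis2pi t) = inverse (cis2pi t)"
      by (metis cis2pi_mult_cnj(1) inverse_unique)
    then show ?thesis using assms(2) by (simp add: field_simps power_inverse)
  qed
  ultimately show ?thesis by simp
qed

lemma cis2pi_power_orthonormal:
  "((\<lambda>t. cis2pi t ^ j * cnj (cis2pi t) ^ k) has_integral (if j = k then 1 else 0)) {0..1}"
proof -
  have le: "((\<lambda>t. cis2pi t ^ j * cnj (cis2pi t) ^ k) has_integral (if j = k then 1 else 0)) {0..1}"
    if "k \<le> j" for j k
  proof -
    have "cis2pi t ^ j * cnj (cis2pi t) ^ k = cis2pi t ^ (j - k)" for t
    proof -
      have "cis2pi t ^ j = cis2pi t ^ (j - k) * cis2pi t ^ k"
        using that by (simp flip: power_add)
      then show ?thesis by (simp add: mult.assoc)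
    qed
    moreover have "((\<lambda>t. (of_real 1 * cis2pi t) ^ (j - k)) has_integral 0 ^ (j - k)) {0..1}"
      by (rule holomorphic_circle_mean) (intro continuous_intros holomorphic_intros | simp)+
    ultimately show ?thesis using that by (auto simp: power_0_left)
  qed
  show ?thesis
  proof (cases "k \<le> j")
    case False
    from has_integral_cnj[OF le[of j k]] False show ?thesis by (simp add: mult.commute)
  qed (rule le)
qed

lemma trig_poly_cnj_integral:
  "((\<lambda>t. (\<Sum>m<M. b m * cis2pi t ^ m) * cnj (\<Sum>m<M. b m * cis2pi t ^ m)) has_integral
     of_real (\<Sum>m<M. (cmod (b m))\<^sup>2)) {0..1}"
proof -
  have "((\<lambda>t. \<Sum>j<M. \<Sum>k<M. (b j * cnj (b k)) * (cis2pi t ^ j * cnj (cis2pi t) ^ k)) has_integral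
          (\<Sum>j<M. \<Sum>k<M. (b j * cnj (b k)) * (if j = k then 1 else 0))) {0..1}"
    by (intro has_integral_sum finite_lessThan has_integral_mult_right cis2pi_power_orthonormal)
  moreover have "(\<Sum>j<M. \<Sum>k<M. (b j * cnj (b k)) * (if j = k then 1 else 0)) = of_real (\<Sum>m<M. (cmod (b m))\<^sup>2)"
    by (simp add: if_distrib cong: if_cong) (simp add: complex_norm_square flip: of_real_power)
  ultimately show ?thesis
    by (simp add: sum_product cnj_sum mult_ac)
qed

text \<open>Pythagoras: the integral of |F|^2 p is S plus the integral of |F - G|^2 p.\<close>

lemma integral_norm_sq_ge_projection:
  fixes F G :: "real \<Rightarrow> complex" and p :: "real \<Rightarrow> real"
  assumes cont: "continuous_on {a..b} F" "continuous_on {a..b} G" "continuous_on {a..b} p"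
    and p_nonneg: "\<And>t. t \<in> {a..b} \<Longrightarrow> p t \<ge> 0"
    and FG: "((\<lambda>t. F t * cnj (G t) * of_real (p t)) has_integral of_real S) {a..b}"
    and GG: "((\<lambda>t. G t * cnj (G t) * of_real (p t)) has_integral of_real S) {a..b}"
  shows "S \<le> integral {a..b} (\<lambda>t. (cmod (F t))\<^sup>2 * p t)"
proof -
  define A where "A = integral {a..b} (\<lambda>t. (cmod (F t))\<^sup>2 * p t)"
  have "((\<lambda>t. (cmod (F t))\<^sup>2 * p t) has_integral A) {a..b}"
    unfolding A_def by (intro integrable_integral integrable_continuous_interval continuous_intros cont)
  from has_integral_of_real[OF this, where 'b=complex]
  have FF: "((\<lambda>t. F t * cnj (F t) * of_real (p t)) has_integral of_real A) {a..b}"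
    by (simp only: of_real_mult complex_norm_square)
  have GF: "((\<lambda>t. G t * cnj (F t) * of_real (p t)) has_integral of_real S) {a..b}"
    using has_integral_cnj[OF FG] by (simp add: mult_ac)
  have "((\<lambda>t. F t * cnj (F t) * of_real (p t) - F t * cnj (G t) * of_real (p t)
              - G t * cnj (F t) * of_real (p t) + G t * cnj (G t) * of_real (p t))
          has_integral of_real A - of_real S - of_real S + of_real S) {a..b}"
    by (intro has_integral_add has_integral_diff FF FG GF GG)
  moreover have "F t * cnj (F t) * of_real (p t) - F t * cnj (G t) * of_real (p t)
              - G t * cnj (F t) * of_real (p t) + G t * cnj (G t) * of_real (p t)
        = of_real ((cmod (F t - G t))\<^sup>2 * p t)" for t
    by (simp only: of_real_mult complex_norm_square) (simp add: algebra_simps)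
  ultimately have diff: "((\<lambda>t. of_real ((cmod (F t - G t))\<^sup>2 * p t)) has_integral (of_real (A - S) :: complex)) {a..b}"
    by simp
  have "(\<lambda>t. (cmod (F t - G t))\<^sup>2 * p t) integrable_on {a..b}"
    by (intro integrable_continuous_interval continuous_intros cont)
  then obtain B where B: "((\<lambda>t. (cmod (F t - G t))\<^sup>2 * p t) has_integral B) {a..b}"
    by blast
  have "B = A - S"
    using has_integral_unique[OF has_integral_of_real[OF B] diff] of_real_eq_iff by blast
  moreover have "B \<ge> 0"
    by (rule has_integral_nonneg[OF B]) (simp add: p_nonneg)
  ultimately show ?thesis unfolding A_def by simp
qed

lemma bessel_inequality_circle:
  assumes cont: "continuous_on {0..1} F"
    and coeffs: "\<And>m. m < M \<Longrightarrow> ((\<lambda>t. F t * cnj (cis2pi t) ^ m) has_integral b m) {0..1}"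
  shows "(\<Sum>m<M. (cmod (b m))\<^sup>2) \<le> integral {0..1} (\<lambda>t. (cmod (F t))\<^sup>2)"
proof -
  define Q where "Q t = (\<Sum>m<M. b m * cis2pi t ^ m)" for t
  have "((\<lambda>t. \<Sum>m<M. cnj (b m) * (F t * cnj (cis2pi t) ^ m)) has_integral (\<Sum>m<M. cnj (b m) * b m)) {0..1}"
    by (intro has_integral_sum finite_lessThan has_integral_mult_right coeffs) auto
  moreover have "(\<Sum>m<M. cnj (b m) * b m) = of_real (\<Sum>m<M. (cmod (b m))\<^sup>2)"
    by (simp only: of_real_sum complex_norm_square mult.commute)
  ultimately have "((\<lambda>t. F t * cnj (Q t) * of_real 1) has_integral of_real (\<Sum>m<M. (cmod (b m))\<^sup>2)) {0..1}"
    by (simp add: Q_def cnj_sum sum_distrib_left mult_ac)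
  moreover have "((\<lambda>t. Q t * cnj (Q t) * of_real 1) has_integral of_real (\<Sum>m<M. (cmod (b m))\<^sup>2)) {0..1}"
    using trig_poly_cnj_integral[of b M] by (simp add: Q_def)
  moreover have "continuous_on {0..1} Q"
    unfolding Q_def by (intro continuous_intros)
  ultimately have "(\<Sum>m<M. (cmod (b m))\<^sup>2) \<le> integral {0..1} (\<lambda>t. (cmod (F t))\<^sup>2 * 1)"
    by (intro integral_norm_sq_ge_projection[where G = Q] cont continuous_on_const) auto
  then show ?thesis by simp
qed

lemma trig_poly_norm_sq_integral:
  "((\<lambda>t. (cmod (\<Sum>m<M. b m * cis2pi t ^ m))\<^sup>2) has_integral (\<Sum>m<M. (cmod (b m))\<^sup>2)) {0..1}"
proof -
  have "(\<lambda>t. (cmod (\<Sum>m<M. b m * cis2pi t ^ m))\<^sup>2) integrable_on {0..1}"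
    by (intro integrable_continuous_interval continuous_intros)
  then obtain I where I: "((\<lambda>t. (cmod (\<Sum>m<M. b m * cis2pi t ^ m))\<^sup>2) has_integral I) {0..1}"
    by blast
  from has_integral_of_real[OF I, where 'b=complex]
  have "((\<lambda>t. (\<Sum>m<M. b m * cis2pi t ^ m) * cnj (\<Sum>m<M. b m * cis2pi t ^ m)) has_integral of_real I) {0..1}"
    by (simp only: complex_norm_square)
  with trig_poly_cnj_integral[of b M] have "I = (\<Sum>m<M. (cmod (b m))\<^sup>2)"
    using has_integral_unique of_real_eq_iff by blast
  with I show ?thesis by simp
qed

section \<open>Coefficient sequences in A^2_beta\<close>

lemma A2_weight_pos: "\<beta> > -1 \<Longrightarrow> A2_weight \<beta> n > 0"
  unfolding A2_weight_def by (intro divide_pos_pos mult_pos_pos Gamma_real_pos) auto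

lemma A2_weight_Suc:
  assumes "\<beta> > -1"
  shows "A2_weight \<beta> (Suc n) = A2_weight \<beta> n * (real n + 1) / (real n + 2 + \<beta>)"
proof -
  have "Gamma (real n + 2 + \<beta> + 1) = (real n + 2 + \<beta>) * Gamma (real n + 2 + \<beta>)"
    by (rule Gamma_plus1) (use assms in \<open>auto elim!: nonpos_Ints_cases\<close>)
  moreover have "Gamma (real n + 2 + \<beta>) > 0"
    using assms by (intro Gamma_real_pos) auto
  ultimately show ?thesis
    using assms unfolding A2_weight_def by (simp add: field_simps)
qed

lemma A2_weight_eq_Beta:
  assumes "\<beta> > -1"
  shows "A2_weight \<beta> n = (\<beta> + 1) * Beta (real n + 1) (\<beta> + 1)"
proof -
  have "Gamma (\<beta> + 1 + 1) = (\<beta> + 1) * Gamma (\<beta> + 1)"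
    by (rule Gamma_plus1) (use assms in \<open>auto elim!: nonpos_Ints_cases\<close>)
  moreover have "Gamma (real n + 1) = fact n"
    using Gamma_fact[of n] by (simp add: add.commute)
  ultimately show ?thesis
    unfolding A2_weight_def Beta_def by (simp add: add_ac mult.commute)
qed

lemma summable_power_div_A2_weight:
  assumes "\<beta> > -1" "0 \<le> x" "x < 1"
  shows "summable (\<lambda>n. x ^ n / A2_weight \<beta> n)"
proof (rule summable_ratio_test)
  define c where "c = (1 + x) / 2"
  show "c < 1" using assms by (simp add: c_def)
  fix n assume n: "n \<ge> nat \<lceil>2 * (2 + \<beta>) / (1 - x)\<rceil>"
  have w: "A2_weight \<beta> n > 0" "A2_weight \<beta> (Suc n) > 0"
    using A2_weight_pos[OF assms(1)] by auto
  have "real n * (1 - x) \<ge> 2 * (2 + \<beta>)"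
    using n assms by (simp add: field_simps)
  moreover have "x * (1 + \<beta>) \<le> 1 + \<beta>"
    using assms mult_right_mono[of x 1 "1 + \<beta>"] by simp
  ultimately have ratio: "x * (real n + 2 + \<beta>) / (real n + 1) \<le> c"
    unfolding c_def using assms by (simp add: algebra_simps divide_simps)
  have "norm (x ^ Suc n / A2_weight \<beta> (Suc n)) = x ^ Suc n / A2_weight \<beta> (Suc n)"
    using assms w by simp
  also have "\<dots> = x ^ n / A2_weight \<beta> n * (x * (real n + 2 + \<beta>) / (real n + 1))"
    using assms w by (simp add: A2_weight_Suc field_simps)
  also have "\<dots> \<le> x ^ n / A2_weight \<beta> n * c"
    using ratio assms w by (intro mult_left_mono) auto
  finally show "norm (x ^ Suc n / A2_weight \<beta> (Suc n)) \<le> c * norm (x ^ n / A2_weight \<beta> n)"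
    using assms w by (simp add: mult.commute)
qed

lemma A2_summable_norm_power:
  assumes "\<beta> > -1" "a \<in> A2 \<beta>" "0 \<le> x" "x < 1"
  shows "summable (\<lambda>n. cmod (a n) * x ^ n)"
proof (rule summable_comparison_test')
  let ?w = "A2_weight \<beta>"
  show "summable (\<lambda>n. (?w n * (cmod (a n))\<^sup>2 + (x\<^sup>2) ^ n / ?w n) / 2)"
    using assms summable_power_div_A2_weight[OF assms(1), of "x\<^sup>2"] unfolding A2_def
    by (intro summable_divide summable_add) (auto simp: abs_square_less_1)
  fix n
  have w: "?w n > 0" using A2_weight_pos[OF assms(1)] .
  have "0 \<le> (?w n * cmod (a n) - x ^ n)\<^sup>2 / ?w n"
    using w by simp
  also have "\<dots> = ?w n * (cmod (a n))\<^sup>2 + (x\<^sup>2) ^ n / ?w n - 2 * (cmod (a n) * x ^ n)"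
    using w by (simp add: field_simps power2_eq_square power_mult_distrib flip: power_mult)
  finally show "norm (cmod (a n) * x ^ n) \<le> (?w n * (cmod (a n))\<^sup>2 + (x\<^sup>2) ^ n / ?w n) / 2"
    using assms by simp
qed

lemma as_fun_holomorphic:
  assumes "\<beta> > -1" "a \<in> A2 \<beta>"
  shows "as_fun a holomorphic_on ball 0 1"
proof -
  have "as_fun a field_differentiable (at z)" if "norm z < 1" for z
  proof -
    define K where "K = (1 + norm z) / 2"
    have K: "0 \<le> K" "K < 1" "norm z < K"
      using that by (auto simp: K_def)
    have "summable (\<lambda>n. norm (a n * of_real K ^ n))"
      using A2_summable_norm_power[OF assms K(1,2)] K by (simp add: norm_mult norm_power)
    then have "summable (\<lambda>n. a n * of_real K ^ n)"
      by (rule summable_norm_cancel)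
    from termdiffs_strong[OF this, of z] K
    show ?thesis
      unfolding as_fun_def[abs_def] field_differentiable_def by auto
  qed
  then show ?thesis
    by (auto simp: holomorphic_on_def intro: field_differentiable_at_within)
qed

lemma as_fun_circle_parseval:
  assumes "\<beta> > -1" "a \<in> A2 \<beta>" "0 \<le> R" "R < 1"
  shows "(\<lambda>n. (cmod (a n))\<^sup>2 * R ^ (2 * n)) sums integral {0..1} (\<lambda>t. (cmod (as_fun a (of_real R * cis2pi t)))\<^sup>2)"
proof -
  define P where "P N t = (\<Sum>n<N. a n * (of_real R * cis2pi t) ^ n)" for N t
  define f where "f t = as_fun a (of_real R * cis2pi t)" for t
  have "uniform_limit {0..1} P f sequentially"
    unfolding P_def f_def as_fun_def
  proof (rule Weierstrass_m_test)
    show "summable (\<lambda>n. cmod (a n) * R ^ n)"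
      by (rule A2_summable_norm_power[OF assms])
    fix n t
    show "norm (a n * (of_real R * cis2pi t) ^ n) \<le> cmod (a n) * R ^ n"
      using assms by (simp add: norm_mult norm_power)
  qed
  moreover have "continuous_on {0..1} f"
    unfolding f_def
    by (rule continuous_on_compose2[OF holomorphic_on_imp_continuous_on[OF as_fun_holomorphic[OF assms(1,2)]]
          continuous_on_circle]) (use assms in auto)
  then have "bounded ((\<lambda>t. norm (f t)) ` {0..1})"
    by (intro compact_imp_bounded compact_continuous_image continuous_intros) auto
  ultimately have lim: "uniform_limit {0..1} (\<lambda>N t. norm (P N t) * norm (P N t)) (\<lambda>t. norm (f t) * norm (f t)) sequentially"
    by (intro uniform_lim_mult uniform_limit_norm)
  have cont: "continuous_on {0..1} (\<lambda>t. norm (P N t) * norm (P N t))" for N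
    unfolding P_def by (intro continuous_intros)
  obtain I J where IJ: "\<And>N. ((\<lambda>t. norm (P N t) * norm (P N t)) has_integral I N) {0..1}"
      "((\<lambda>t. norm (f t) * norm (f t)) has_integral J) {0..1}" "I \<longlonglongrightarrow> J"
    using uniform_limit_integral[OF lim cont] by auto
  have "I = (\<lambda>N. \<Sum>n<N. (cmod (a n))\<^sup>2 * R ^ (2 * n))"
  proof
    fix N
    have "P N t = (\<Sum>n<N. (a n * of_real R ^ n) * cis2pi t ^ n)" for t
      by (simp add: P_def power_mult_distrib mult.assoc)
    moreover have "(cmod (a n * of_real R ^ n))\<^sup>2 = (cmod (a n))\<^sup>2 * R ^ (2 * n)" for n
      using assms by (simp add: norm_mult norm_power power_mult_distrib mult.commute flip: power_mult)
    ultimately have "((\<lambda>t. (norm (P N t))\<^sup>2) has_integral (\<Sum>n<N. (cmod (a n))\<^sup>2 * R ^ (2 * n))) {0..1}"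
      using trig_poly_norm_sq_integral[of "\<lambda>n. a n * of_real R ^ n" N] by simp
    with IJ(1)[of N] show "I N = (\<Sum>n<N. (cmod (a n))\<^sup>2 * R ^ (2 * n))"
      unfolding power2_eq_square using has_integral_unique by blast
  qed
  with IJ(2,3) show ?thesis
    unfolding sums_def f_def by (simp add: power2_eq_square integral_unique)
qed

section \<open>The Poisson kernel and subordination\<close>

definition poisson_kernel :: "real \<Rightarrow> complex \<Rightarrow> complex \<Rightarrow> real" where
  "poisson_kernel R w \<xi> = (R\<^sup>2 - (cmod w)\<^sup>2) / (cmod (\<xi> - w))\<^sup>2"

lemma poisson_kernel_nonneg: "norm w \<le> R \<Longrightarrow> poisson_kernel R w \<xi> \<ge> 0"
  unfolding poisson_kernel_def by (intro divide_nonneg_nonneg) (auto intro: power_mono)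

lemma poisson_kernel_eq_Re:
  assumes "cmod \<xi> = R"
  shows "poisson_kernel R w \<xi> = Re ((\<xi> + w) / (\<xi> - w))"
proof -
  have "R\<^sup>2 - (cmod w)\<^sup>2 = Re (\<xi> + w) * Re (\<xi> - w) + Im (\<xi> + w) * Im (\<xi> - w)"
    using assms by (simp add: cmod_power2 flip: assms) (simp add: algebra_simps power2_eq_square)
  then show ?thesis
    unfolding poisson_kernel_def Re_divide cmod_power2[of "\<xi> - w"] by simp
qed

lemma poisson_kernel_le:
  assumes "cmod \<xi> = R" "cmod w < R"
  shows "poisson_kernel R w \<xi> \<le> (R + cmod w) / (R - cmod w)"
proof -
  have "R - cmod w \<le> cmod (\<xi> - w)"
    using assms norm_triangle_ineq2[of \<xi> w] by simp
  then have "(R - cmod w)\<^sup>2 \<le> (cmod (\<xi> - w))\<^sup>2"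
    using assms by (intro power_mono) auto
  moreover have "R\<^sup>2 - (cmod w)\<^sup>2 \<ge> 0"
    using assms by (intro power_mono diff_ge_0_iff_ge[THEN iffD2]) auto
  ultimately have "poisson_kernel R w \<xi> \<le> (R\<^sup>2 - (cmod w)\<^sup>2) / (R - cmod w)\<^sup>2"
    unfolding poisson_kernel_def using assms by (intro divide_left_mono mult_pos_pos) auto
  also have "\<dots> = (R + cmod w) * (R - cmod w) / ((R - cmod w) * (R - cmod w))"
    by (simp add: power2_eq_square algebra_simps)
  also have "\<dots> = (R + cmod w) / (R - cmod w)"
    using assms by simp
  finally show ?thesis .
qed

lemma continuous_on_poisson_kernel_circle:
  assumes "0 < R" "norm w < R"
  shows "continuous_on S (\<lambda>s. poisson_kernel R w (of_real R * cis2pi s))"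
proof -
  have "of_real R * cis2pi s \<noteq> w" for s
    using assms norm_of_real_mult_cis2pi[of R s] by auto
  then show ?thesis
    unfolding poisson_kernel_def by (intro continuous_intros) auto
qed

text \<open>The Poisson kernel is the Cauchy kernel plus the kernel of a function holomorphic
  on the closed disc of radius R; the latter integrates to zero against holomorphic functions.\<close>

lemma poisson_kernel_split:
  assumes "\<xi> * cnj \<xi> = of_real (R\<^sup>2)" "\<xi> \<noteq> w" "\<xi> \<noteq> 0"
  shows "\<xi> / (\<xi> - w) + cnj w * \<xi> / (of_real (R\<^sup>2) - cnj w * \<xi>) = of_real (poisson_kernel R w \<xi>)"
proof -
  have ne: "cnj \<xi> - cnj w \<noteq> 0" "\<xi> - w \<noteq> 0"
    using assms(2) by (metis complex_cnj_cancel_iff eq_iff_diff_eq_0)+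
  have "of_real (poisson_kernel R w \<xi>) = (\<xi> * cnj \<xi> - w * cnj w) / ((\<xi> - w) * cnj (\<xi> - w))"
    by (simp only: poisson_kernel_def of_real_divide of_real_diff complex_norm_square assms(1)[symmetric])
  also have "\<dots> = (\<xi> * (cnj \<xi> - cnj w) + cnj w * (\<xi> - w)) / ((\<xi> - w) * (cnj \<xi> - cnj w))"
    by (simp add: algebra_simps)
  also have "\<dots> = \<xi> / (\<xi> - w) + cnj w / (cnj \<xi> - cnj w)"
    using add_frac_eq[OF ne(2,1), of \<xi> "cnj w"] by simp
  also have "cnj w / (cnj \<xi> - cnj w) = cnj w * \<xi> / (\<xi> * (cnj \<xi> - cnj w))"
    using assms(3) by simp
  also have "\<xi> * (cnj \<xi> - cnj w) = \<xi> * cnj \<xi> - cnj w * \<xi>"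
    by (simp add: algebra_simps)
  finally show ?thesis using assms(1) by simp
qed

lemma circle_integral_reflected_cauchy_kernel:
  assumes hol: "f holomorphic_on ball 0 1" and R: "0 < R" "R < 1" and w: "norm w < R"
  shows "((\<lambda>t. f (of_real R * cis2pi t) * (cnj w * (of_real R * cis2pi t) / (of_real (R\<^sup>2) - cnj w * (of_real R * cis2pi t))))
           has_integral 0) {0..1}"
proof -
  define g where "g u = f u * (cnj w * u / (of_real (R\<^sup>2) - cnj w * u))" for u
  have den: "of_real (R\<^sup>2) - cnj w * u \<noteq> 0" if "norm u \<le> R" for u
  proof -
    have "norm (cnj w * u) \<le> norm w * R"
      using that by (simp add: norm_mult mult_left_mono)
    also have "\<dots> < R\<^sup>2"
      using w R by (simp add: power2_eq_square)
    finally have "norm (cnj w * u) < R\<^sup>2" .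
    then show ?thesis
      by (metis abs_power2 eq_iff_diff_eq_0 less_irrefl norm_of_real)
  qed
  have "((\<lambda>t. g (of_real R * cis2pi t)) has_integral g 0) {0..1}"
  proof (rule holomorphic_circle_mean[OF _ _ R(1)])
    show "continuous_on (cball 0 R) g" unfolding g_def
      by (intro continuous_intros holomorphic_on_imp_continuous_on holomorphic_on_subset[OF hol])
         (use den R in auto)
    show "g holomorphic_on ball 0 R" unfolding g_def
      by (intro holomorphic_intros holomorphic_on_subset[OF hol]) (use den R in auto)
  qed
  then show ?thesis
    by (simp add: g_def)
qed

lemma poisson_formula:
  assumes hol: "f holomorphic_on ball 0 1" and R: "0 < R" "R < 1" and w: "norm w < R"
  shows "((\<lambda>s. f (of_real R * cis2pi s) * of_real (poisson_kernel R w (of_real R * cis2pi s))) has_integral f w) {0..1}"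
proof -
  have "continuous_on (cball 0 R) f"
    by (rule holomorphic_on_imp_continuous_on, rule holomorphic_on_subset[OF hol]) (use R in auto)
  moreover have "f holomorphic_on ball 0 R"
    by (rule holomorphic_on_subset[OF hol]) (use R in auto)
  ultimately have "((\<lambda>u. f u / (u - w)) has_contour_integral (2 * of_real pi * \<i> * f w)) (circlepath 0 R)"
    by (intro Cauchy_integral_circlepath) (use w in auto)
  from has_integral_add[OF has_contour_integral_circlepath_cis2pi[OF this]
      circle_integral_reflected_cauchy_kernel[OF hol R w]]
  have "((\<lambda>t. f (of_real R * cis2pi t) * ((of_real R * cis2pi t) / (of_real R * cis2pi t - w))
           + f (of_real R * cis2pi t) * (cnj w * (of_real R * cis2pi t) / (of_real (R\<^sup>2) - cnj w * (of_real R * cis2pi t))))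
          has_integral f w) {0..1}"
    by (simp add: mult_ac)
  then show ?thesis
  proof (rule has_integral_eq[rotated])
    fix t
    define \<xi> where "\<xi> = of_real R * cis2pi t"
    have "norm \<xi> = R"
      using R by (simp add: \<xi>_def)
    then have "\<xi> * cnj \<xi> = of_real (R\<^sup>2)" "\<xi> \<noteq> w" "\<xi> \<noteq> 0"
      using complex_norm_square[of \<xi>] w R by auto
    from poisson_kernel_split[OF this]
    show "f \<xi> * (\<xi> / (\<xi> - w)) + f \<xi> * (cnj w * \<xi> / (of_real (R\<^sup>2) - cnj w * \<xi>))
            = f \<xi> * of_real (poisson_kernel R w \<xi>)"
      by (simp only: flip: distrib_left)
  qed
qed

lemma poisson_kernel_integral:
  assumes "0 < R" "R < 1" "norm w < R"
  shows "((\<lambda>s. poisson_kernel R w (of_real R * cis2pi s)) has_integral 1) {0..1}"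
  using has_integral_Re[OF poisson_formula[of "\<lambda>_. 1" R w]] assms by simp

lemma norm_sq_le_poisson_integral:
  assumes hol: "f holomorphic_on ball 0 1" and R: "0 < R" "R < 1" and w: "norm w < R"
  shows "(cmod (f w))\<^sup>2 \<le>
           integral {0..1} (\<lambda>s. (cmod (f (of_real R * cis2pi s)))\<^sup>2 * poisson_kernel R w (of_real R * cis2pi s))"
proof (rule integral_norm_sq_ge_projection)
  let ?p = "\<lambda>s. poisson_kernel R w (of_real R * cis2pi s)"
  show "continuous_on {0..1} (\<lambda>s. f (of_real R * cis2pi s))"
    by (rule continuous_on_compose2[OF holomorphic_on_imp_continuous_on[OF hol]
          continuous_on_circle]) (use R in auto)
  show "continuous_on {0..1} ?p"
    by (rule continuous_on_poisson_kernel_circle) (use R w in auto)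
  show "?p s \<ge> 0" for s
    by (rule poisson_kernel_nonneg) (use w in auto)
  show "((\<lambda>s. f (of_real R * cis2pi s) * cnj (f w) * of_real (?p s)) has_integral of_real ((cmod (f w))\<^sup>2)) {0..1}"
    using has_integral_mult_left[OF poisson_formula[OF hol R w], of "cnj (f w)"]
    by (simp add: complex_norm_square mult_ac flip: of_real_power)
  show "((\<lambda>s. f w * cnj (f w) * of_real (?p s)) has_integral of_real ((cmod (f w))\<^sup>2)) {0..1}"
    using has_integral_mult_right[OF has_integral_of_real[OF poisson_kernel_integral[OF R w]], of "f w * cnj (f w)"]
    by (simp add: complex_norm_square flip: of_real_power)
qed auto

lemma poisson_kernel_mean_value:
  assumes hol: "\<phi> holomorphic_on ball 0 1" and r: "0 < r" "r < 1"
    and bnd: "\<And>z. norm z \<le> r \<Longrightarrow> norm (\<phi> z) < R" and \<xi>: "cmod \<xi> = R"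
  shows "((\<lambda>t. poisson_kernel R (\<phi> (of_real r * cis2pi t)) \<xi>) has_integral poisson_kernel R (\<phi> 0) \<xi>) {0..1}"
proof -
  define g where "g z = (\<xi> + \<phi> z) / (\<xi> - \<phi> z)" for z
  have cont: "continuous_on (cball 0 r) \<phi>"
    by (rule holomorphic_on_imp_continuous_on, rule holomorphic_on_subset[OF hol]) (use r in auto)
  have hb: "\<phi> holomorphic_on ball 0 r"
    by (rule holomorphic_on_subset[OF hol]) (use r in auto)
  have ne: "\<xi> - \<phi> z \<noteq> 0" if "norm z \<le> r" for z
    using bnd[OF that] \<xi> by auto
  have "((\<lambda>t. g (of_real r * cis2pi t)) has_integral g 0) {0..1}"
  proof (rule holomorphic_circle_mean[OF _ _ r(1)])
    show "continuous_on (cball 0 r) g" unfolding g_def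
      by (intro continuous_intros cont) (use ne in auto)
    show "g holomorphic_on ball 0 r" unfolding g_def
      by (intro holomorphic_intros hb) (use ne in auto)
  qed
  from has_integral_Re[OF this] show ?thesis
    unfolding g_def using poisson_kernel_eq_Re[OF \<xi>] by simp
qed

lemma continuous_on_poisson_kernel_family:
  fixes g :: "real \<Rightarrow> complex"
  assumes "continuous_on UNIV g" "\<And>t. norm (g t) < R"
  shows "continuous_on UNIV (\<lambda>(t, s). poisson_kernel R (g t) (of_real R * cis2pi s))"
proof -
  have "of_real R * cis2pi s - g t \<noteq> 0" for s t
  proof
    assume "of_real R * cis2pi s - g t = 0"
    then have "norm (g t) = \<bar>R\<bar>"
      by (metis eq_iff_diff_eq_0 norm_of_real_mult_cis2pi)
    then show False
      using assms(2)[of t] abs_ge_self[of R] by linarith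
  qed
  moreover have "continuous_on UNIV (\<lambda>x::real \<times> real. g (fst x))"
    by (rule continuous_on_compose2[OF assms(1)]) (auto intro: continuous_on_fst continuous_on_id)
  ultimately have "continuous_on UNIV (\<lambda>x::real \<times> real. poisson_kernel R (g (fst x)) (of_real R * cis2pi (snd x)))"
    unfolding poisson_kernel_def by (intro continuous_intros) auto
  then show ?thesis
    by (simp add: case_prod_beta')
qed

lemma integral_poisson_kernel_le:
  assumes "continuous_on {0..1} F" "0 < R" "cmod c < R"
  shows "integral {0..1} (\<lambda>s. (cmod (F s))\<^sup>2 * poisson_kernel R c (of_real R * cis2pi s))
           \<le> (R + cmod c) / (R - cmod c) * integral {0..1} (\<lambda>s. (cmod (F s))\<^sup>2)"
proof -
  have "integral {0..1} (\<lambda>s. (cmod (F s))\<^sup>2 * poisson_kernel R c (of_real R * cis2pi s))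
          \<le> integral {0..1} (\<lambda>s. (R + cmod c) / (R - cmod c) * (cmod (F s))\<^sup>2)"
  proof (rule integral_le)
    show "(\<lambda>s. (cmod (F s))\<^sup>2 * poisson_kernel R c (of_real R * cis2pi s)) integrable_on {0..1}"
      using assms by (intro integrable_continuous_interval continuous_intros continuous_on_poisson_kernel_circle)
    show "(\<lambda>s. (R + cmod c) / (R - cmod c) * (cmod (F s))\<^sup>2) integrable_on {0..1}"
      using assms by (intro integrable_continuous_interval continuous_intros)
    show "(cmod (F s))\<^sup>2 * poisson_kernel R c (of_real R * cis2pi s) \<le> (R + cmod c) / (R - cmod c) * (cmod (F s))\<^sup>2" for s
    proof -
      have "poisson_kernel R c (of_real R * cis2pi s) \<le> (R + cmod c) / (R - cmod c)"
        by (rule poisson_kernel_le) (use assms in simp_all)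
      from mult_right_mono[OF this zero_le_power2[of "cmod (F s)"]] show ?thesis
        by (simp add: mult.commute)
    qed
  qed
  then show ?thesis
    by simp
qed

text \<open>Littlewood subordination on circles: bound the subharmonic function |f|^2 at
  \<phi>(r cis2pi t) by its Poisson integral over the circle of radius R, integrate in t and
  swap the integrals; the inner integral is the Poisson kernel at \<phi>(0), by harmonicity.\<close>

lemma circle_subordination:
  assumes holf: "f holomorphic_on ball 0 1" and hol\<phi>: "\<phi> holomorphic_on ball 0 1"
    and r: "0 < r" "r < 1" and R: "0 < R" "R < 1"
    and bnd: "\<And>z. norm z \<le> r \<Longrightarrow> norm (\<phi> z) < R"
  shows "integral {0..1} (\<lambda>t. (cmod (f (\<phi> (of_real r * cis2pi t))))\<^sup>2)
           \<le> integral {0..1} (\<lambda>s. (cmod (f (of_real R * cis2pi s)))\<^sup>2 * poisson_kernel R (\<phi> 0) (of_real R * cis2pi s))"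
proof -
  define G where "G t s = (cmod (f (of_real R * cis2pi s)))\<^sup>2 * poisson_kernel R (\<phi> (of_real r * cis2pi t)) (of_real R * cis2pi s)" for t s
  have \<phi>_circle: "norm (\<phi> (of_real r * cis2pi t)) < R" for t
    by (rule bnd) (use r in simp)
  have cont_\<phi>: "continuous_on UNIV (\<lambda>t. \<phi> (of_real r * cis2pi t))"
    by (rule continuous_on_compose2[OF holomorphic_on_imp_continuous_on[OF hol\<phi>]
          continuous_on_circle]) (use r in auto)
  have cont_f: "continuous_on UNIV (\<lambda>s. f (of_real R * cis2pi s))"
    by (rule continuous_on_compose2[OF holomorphic_on_imp_continuous_on[OF holf]
          continuous_on_circle]) (use R in auto)
  have "continuous_on UNIV (\<lambda>x::real \<times> real. f (of_real R * cis2pi (snd x)))"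
    by (rule continuous_on_compose2[OF cont_f]) (auto intro: continuous_on_snd continuous_on_id)
  then have cont_G: "continuous_on UNIV (\<lambda>(t, s). G t s)"
    using continuous_on_poisson_kernel_family[OF cont_\<phi> \<phi>_circle]
    unfolding G_def case_prod_beta' by (intro continuous_intros)
  have "integral {0..1} (\<lambda>t. (cmod (f (\<phi> (of_real r * cis2pi t))))\<^sup>2) \<le> integral {0..1} (\<lambda>t. integral {0..1} (G t))"
  proof (rule integral_le)
    have "continuous_on {0..1} (\<lambda>t. f (\<phi> (of_real r * cis2pi t)))"
      by (rule continuous_on_compose2[OF holomorphic_on_imp_continuous_on[OF holf]
            continuous_on_subset[OF cont_\<phi> subset_UNIV]])
         (use less_trans[OF \<phi>_circle R(2)] in auto)
    then show "(\<lambda>t. (cmod (f (\<phi> (of_real r * cis2pi t))))\<^sup>2) integrable_on {0..1}"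
      by (intro integrable_continuous_interval continuous_intros)
    have "continuous_on {0..1} (\<lambda>t. integral (cbox 0 1) (G t))"
      by (rule integral_continuous_on_param) (use cont_G continuous_on_subset in \<open>auto simp: case_prod_beta'\<close>)
    then show "(\<lambda>t. integral {0..1} (G t)) integrable_on {0..1}"
      by (intro integrable_continuous_interval) simp
    show "(cmod (f (\<phi> (of_real r * cis2pi t))))\<^sup>2 \<le> integral {0..1} (G t)" for t
      unfolding G_def by (rule norm_sq_le_poisson_integral[OF holf R \<phi>_circle])
  qed
  also have "\<dots> = integral {0..1} (\<lambda>s. integral {0..1} (\<lambda>t. G t s))"
    using integral_swap_continuous[of 0 0 1 1 "\<lambda>t s. G t s"] continuous_on_subset[OF cont_G] by simp
  also have "\<dots> = integral {0..1} (\<lambda>s. (cmod (f (of_real R * cis2pi s)))\<^sup>2 * poisson_kernel R (\<phi> 0) (of_real R * cis2pi s))"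
  proof (rule integral_cong)
    fix s
    have "cmod (of_real R * cis2pi s) = R"
      using R by simp
    from has_integral_mult_right[OF poisson_kernel_mean_value[OF hol\<phi> r bnd this]]
    show "integral {0..1} (\<lambda>t. G t s) = (cmod (f (of_real R * cis2pi s)))\<^sup>2 * poisson_kernel R (\<phi> 0) (of_real R * cis2pi s)"
      unfolding G_def by (rule integral_unique)
  qed
  finally show ?thesis .
qed

lemma comp_op_circle_bound:
  assumes "\<beta> > -1" "a \<in> A2 \<beta>"
    and hol\<phi>: "\<phi> holomorphic_on ball 0 1" and maps: "\<phi> ` ball 0 1 \<subseteq> ball 0 1"
    and r: "0 < r" "r < 1" and R: "0 < R" "R < 1"
    and bnd: "\<And>z. norm z \<le> r \<Longrightarrow> norm (\<phi> z) < R"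
  shows "(\<Sum>m<M. (cmod (comp_op \<phi> a m))\<^sup>2 * r ^ (2 * m))
          \<le> (R + cmod (\<phi> 0)) / (R - cmod (\<phi> 0)) * (\<Sum>n. (cmod (a n))\<^sup>2 * R ^ (2 * n))"
proof -
  define h where "h z = as_fun a (\<phi> z)" for z
  have holf: "as_fun a holomorphic_on ball 0 1"
    by (rule as_fun_holomorphic[OF assms(1,2)])
  have holh: "h holomorphic_on ball 0 1"
    unfolding h_def using holomorphic_on_compose[OF hol\<phi> holomorphic_on_subset[OF holf maps]]
    by (simp add: o_def)
  have "continuous_on {0..1} (\<lambda>t. h (of_real r * cis2pi t))"
    by (rule continuous_on_compose2[OF holomorphic_on_imp_continuous_on[OF holh]
          continuous_on_circle]) (use r in auto)
  then have "(\<Sum>m<M. (cmod (taylor_coeffs h m * of_real r ^ m))\<^sup>2)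
               \<le> integral {0..1} (\<lambda>t. (cmod (h (of_real r * cis2pi t)))\<^sup>2)"
    by (rule bessel_inequality_circle) (rule taylor_coeffs_circle_integral[OF holh r])
  also have "\<dots> \<le> integral {0..1} (\<lambda>s. (cmod (as_fun a (of_real R * cis2pi s)))\<^sup>2 * poisson_kernel R (\<phi> 0) (of_real R * cis2pi s))"
    unfolding h_def by (rule circle_subordination[OF holf hol\<phi> r R bnd])
  also have "\<dots> \<le> (R + cmod (\<phi> 0)) / (R - cmod (\<phi> 0)) * integral {0..1} (\<lambda>s. (cmod (as_fun a (of_real R * cis2pi s)))\<^sup>2)"
    using bnd[of 0] r R
    by (intro integral_poisson_kernel_le continuous_on_compose2[OF holomorphic_on_imp_continuous_on[OF holf]
          continuous_on_circle]) auto
  also have "integral {0..1} (\<lambda>s. (cmod (as_fun a (of_real R * cis2pi s)))\<^sup>2) = (\<Sum>n. (cmod (a n))\<^sup>2 * R ^ (2 * n))"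
    using as_fun_circle_parseval[OF assms(1,2), of R] R by (simp add: sums_iff)
  finally show ?thesis
    using r by (simp add: comp_op_def h_def norm_mult norm_power power_mult_distrib mult.commute flip: power_mult)
qed

section \<open>Composition operators map A^2_beta into itself\<close>

lemma one_minus_norm_Moebius_function_sq:
  assumes "norm w < 1" "norm z < 1"
  shows "1 - (norm (Moebius_function 0 w z))\<^sup>2 = (1 - (norm w)\<^sup>2) * (1 - (norm z)\<^sup>2) / (norm (1 - cnj w * z))\<^sup>2"
proof -
  have "norm (cnj w * z) < 1"
    using norm_mult_less[of "cnj w" 1 z 1] assms by simp
  then have "1 - cnj w * z \<noteq> 0"
    by auto
  moreover have "(norm (1 - cnj w * z))\<^sup>2 - (norm (z - w))\<^sup>2 = (1 - (norm w)\<^sup>2) * (1 - (norm z)\<^sup>2)"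
    unfolding cmod_power2 by (simp add: algebra_simps power2_eq_square)
  ultimately show ?thesis
    by (simp add: Moebius_function_simple norm_divide power_divide field_simps)
qed

lemma schwarz_pick_norm_bound:
  assumes hol: "\<phi> holomorphic_on ball 0 1" and maps: "\<phi> ` ball 0 1 \<subseteq> ball 0 1" and z: "norm z < 1"
  shows "(1 - (norm (\<phi> 0))\<^sup>2) / 4 * (1 - (norm z)\<^sup>2) \<le> 1 - (norm (\<phi> z))\<^sup>2"
proof -
  define c where "c = \<phi> 0"
  define \<psi> where "\<psi> = Moebius_function 0 c \<circ> \<phi>"
  have \<phi>_disc: "norm (\<phi> u) < 1" if "norm u < 1" for u
    using maps that by (auto simp: image_subset_iff)
  have c: "norm c < 1"
    unfolding c_def by (rule \<phi>_disc) simp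
  have "\<psi> holomorphic_on ball 0 1"
    unfolding \<psi>_def by (rule holomorphic_on_compose_gen[OF hol Moebius_function_holomorphic[OF c] maps])
  moreover have "\<psi> 0 = 0"
    by (simp add: \<psi>_def c_def Moebius_function_eq_zero)
  moreover have "norm (\<psi> u) < 1" if "norm u < 1" for u
    unfolding \<psi>_def using Moebius_function_norm_lt_1[OF c \<phi>_disc[OF that]] by simp
  ultimately have "norm (\<psi> z) \<le> norm z"
    using Schwarz_Lemma' z by blast
  define v where "v = \<psi> z"
  have v: "norm v < 1" "norm v \<le> norm z"
    using \<open>norm (\<psi> z) \<le> norm z\<close> z by (auto simp: v_def)
  have "\<phi> z = Moebius_function 0 (- c) v"
    unfolding v_def \<psi>_def using Moebius_function_compose[of "- c" c "\<phi> z"] c \<phi>_disc[OF z] by simp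
  then have eq: "1 - (norm (\<phi> z))\<^sup>2 = (1 - (norm c)\<^sup>2) * (1 - (norm v)\<^sup>2) / (norm (1 + cnj c * v))\<^sup>2"
    using one_minus_norm_Moebius_function_sq[of "- c" v] c v by simp
  have "norm (cnj c * v) < 1"
    using norm_mult_less[of "cnj c" 1 v 1] c v by simp
  then have "0 < norm (1 + cnj c * v)" "norm (1 + cnj c * v) \<le> 2"
    using norm_triangle_ineq[of 1 "cnj c * v"] by (auto simp: add_eq_0_iff)
  then have D: "0 < (norm (1 + cnj c * v))\<^sup>2" "(norm (1 + cnj c * v))\<^sup>2 \<le> 4"
    using power_mono[of "norm (1 + cnj c * v)" 2 2] by auto
  have "0 \<le> 1 - (norm c)\<^sup>2" "0 \<le> 1 - (norm z)\<^sup>2" "1 - (norm z)\<^sup>2 \<le> 1 - (norm v)\<^sup>2"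
    using c v z by (auto simp: abs_square_le_1 power_mono)
  then have "(1 - (norm c)\<^sup>2) / 4 * (1 - (norm z)\<^sup>2) \<le> (1 - (norm c)\<^sup>2) * (1 - (norm z)\<^sup>2) / (norm (1 + cnj c * v))\<^sup>2"
    using divide_left_mono[OF D(2), of "(1 - (norm c)\<^sup>2) * (1 - (norm z)\<^sup>2)"] D by simp
  also have "\<dots> \<le> (1 - (norm c)\<^sup>2) * (1 - (norm v)\<^sup>2) / (norm (1 + cnj c * v))\<^sup>2"
    using D \<open>0 \<le> 1 - (norm c)\<^sup>2\<close> \<open>1 - (norm z)\<^sup>2 \<le> 1 - (norm v)\<^sup>2\<close>
    by (intro divide_right_mono mult_left_mono) auto
  finally show ?thesis
    unfolding eq c_def .
qed
definition bergman_density :: "real \<Rightarrow> real \<Rightarrow> real" where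
  "bergman_density \<beta> s = indicator {0<..<1} s * (1 - s) powr \<beta>"

lemma bergman_density_nonneg: "bergman_density \<beta> s \<ge> 0"
  unfolding bergman_density_def by (simp add: indicator_def)

lemma bergman_density_measurable [measurable]: "(\<lambda>s. bergman_density \<beta> s) \<in> borel_measurable borel"
  unfolding bergman_density_def by measurable

lemma nn_integral_bergman_density_power:
  assumes b: "\<beta> > -1"
  shows "(\<integral>\<^sup>+s. ennreal (bergman_density \<beta> s * s ^ n) \<partial>lborel) = ennreal (A2_weight \<beta> n / (\<beta> + 1))"
proof -
  have "((\<lambda>t. t powr (real n + 1 - 1) * (1 - t) powr (\<beta> + 1 - 1)) has_integral Beta (real n + 1) (\<beta> + 1)) {0..1}"
    by (rule has_integral_Beta_real) (use b in auto)
  hence HI: "((\<lambda>t. t powr (real n) * (1 - t) powr \<beta>) has_integral Beta (real n + 1) (\<beta> + 1)) {0..1}"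
    by simp
  have "(\<integral>\<^sup>+x. ennreal (indicator {0..1} x * (x powr (real n) * (1 - x) powr \<beta>)) \<partial>lborel) = ennreal (Beta (real n + 1) (\<beta> + 1))"
    by (rule nn_integral_has_integral_lebesgue[OF _ HI]) auto
  moreover have "(\<integral>\<^sup>+s. ennreal (bergman_density \<beta> s * s ^ n) \<partial>lborel) =
                 (\<integral>\<^sup>+x. ennreal (indicator {0..1} x * (x powr (real n) * (1 - x) powr \<beta>)) \<partial>lborel)"
  proof (rule nn_integral_cong_AE)
    have "AE x in lborel. x \<noteq> (0::real)" by (rule AE_lborel_singleton)
    moreover have "AE x in lborel. x \<noteq> (1::real)" by (rule AE_lborel_singleton)
    ultimately show "AE x in lborel. ennreal (bergman_density \<beta> x * x ^ n) = ennreal (indicator {0..1} x * (x powr (real n) * (1 - x) powr \<beta>))"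
    proof eventually_elim
      case (elim x)
      show ?case
      proof (cases "0 < x \<and> x < 1")
        case True thus ?thesis by (simp add: bergman_density_def powr_realpow mult_ac)
      next
        case False
        with elim have "x \<notin> {0..1}" by auto
        with False show ?thesis by (simp add: bergman_density_def)
      qed
    qed
  qed
  moreover have "Beta (real n + 1) (\<beta> + 1) = A2_weight \<beta> n / (\<beta> + 1)"
    using A2_weight_eq_Beta[OF b, of n] b by (simp add: field_simps)
  ultimately show ?thesis by simp
qed

lemma bergman_density_dilate:
  assumes "0 < \<delta>" "\<delta> \<le> 1" "0 < s" "s < 1"
  shows "bergman_density \<beta> (1 - \<delta> + \<delta> * s) = \<delta> powr \<beta> * bergman_density \<beta> s"
proof -
  have "\<delta> * (1 - s) \<le> 1 - s"
    using assms mult_right_mono[of \<delta> 1 "1 - s"] by simp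
  then have "1 - \<delta> + \<delta> * s \<in> {0<..<1}"
    using assms by (auto simp: algebra_simps)
  moreover have "1 - (1 - \<delta> + \<delta> * s) = \<delta> * (1 - s)"
    by (simp add: algebra_simps)
  moreover have "(\<delta> * (1 - s)) powr \<beta> = \<delta> powr \<beta> * (1 - s) powr \<beta>"
    using assms by (simp add: powr_mult)
  ultimately show ?thesis
    using assms by (simp add: bergman_density_def)
qed

lemma nn_integral_bergman_density_dilated:
  assumes "0 < \<delta>" "\<delta> \<le> 1"
  shows "(\<integral>\<^sup>+s. ennreal (bergman_density \<beta> s * (1 - \<delta> * (1 - s)) ^ n) \<partial>lborel)
          \<le> ennreal (\<delta> powr (- \<beta> - 1)) * (\<integral>\<^sup>+s. ennreal (bergman_density \<beta> s * s ^ n) \<partial>lborel)"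
proof -
  define f where "f u = ennreal (bergman_density \<beta> u * u ^ n)" for u
  have f: "f \<in> borel_measurable borel"
    unfolding f_def by measurable
  have "ennreal (bergman_density \<beta> s * (1 - \<delta> * (1 - s)) ^ n) \<le> ennreal (\<delta> powr (- \<beta>)) * f (1 - \<delta> + \<delta> * s)" for s
  proof (cases "0 < s \<and> s < 1")
    case True
    have "bergman_density \<beta> s = \<delta> powr (- \<beta>) * bergman_density \<beta> (1 - \<delta> + \<delta> * s)"
      using bergman_density_dilate[of \<delta> s \<beta>] assms True by (simp add: powr_minus field_simps)
    moreover have "0 \<le> bergman_density \<beta> (1 - \<delta> + \<delta> * s) * (1 - \<delta> + \<delta> * s) ^ n"
      using assms True by (intro mult_nonneg_nonneg bergman_density_nonneg) (simp add: add_nonneg_pos)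
    ultimately show ?thesis
      unfolding f_def by (simp add: ennreal_mult' mult_ac algebra_simps)
  qed (auto simp: bergman_density_def)
  then have "(\<integral>\<^sup>+s. ennreal (bergman_density \<beta> s * (1 - \<delta> * (1 - s)) ^ n) \<partial>lborel)
               \<le> (\<integral>\<^sup>+s. ennreal (\<delta> powr (- \<beta>)) * f (1 - \<delta> + \<delta> * s) \<partial>lborel)"
    by (intro nn_integral_mono)
  also have "\<dots> = ennreal (\<delta> powr (- \<beta>)) * (\<integral>\<^sup>+s. f (1 - \<delta> + \<delta> * s) \<partial>lborel)"
    by (intro nn_integral_cmult measurable_compose[OF _ f]) measurable
  also have "\<dots> = ennreal (\<delta> powr (- \<beta> - 1)) * (ennreal \<delta> * (\<integral>\<^sup>+s. f (1 - \<delta> + \<delta> * s) \<partial>lborel))"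
    using assms by (simp add: mult.assoc[symmetric] powr_diff flip: ennreal_mult)
  also have "ennreal \<delta> * (\<integral>\<^sup>+s. f (1 - \<delta> + \<delta> * s) \<partial>lborel) = (\<integral>\<^sup>+u. f u \<partial>lborel)"
    using nn_integral_real_affine[OF f, of \<delta> "1 - \<delta>"] assms by simp
  finally show ?thesis
    unfolding f_def .
qed

lemma bergman_partial_sum_le:
  assumes x: "\<And>m. x m \<ge> 0" and y: "\<And>n. y n \<ge> 0" and K: "K \<ge> 0" and \<delta>: "\<delta> \<le> 1"
    and summable_y: "\<And>s. 0 < s \<Longrightarrow> s < 1 \<Longrightarrow> summable (\<lambda>n. y n * (1 - \<delta> * (1 - s)) ^ n)"
    and H: "\<And>s M. 0 < s \<Longrightarrow> s < 1 \<Longrightarrow> (\<Sum>m<M. x m * s ^ m) \<le> K * (\<Sum>n. y n * (1 - \<delta> * (1 - s)) ^ n)"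
  shows "(\<Sum>m<N. ennreal (x m * (bergman_density \<beta> s * s ^ m)))
           \<le> (\<Sum>n. ennreal (K * y n * (bergman_density \<beta> s * (1 - \<delta> * (1 - s)) ^ n)))"
proof (cases "0 < s \<and> s < 1")
  case True
  define \<rho> where "\<rho> = 1 - \<delta> * (1 - s)"
  define d where "d = bergman_density \<beta> s"
  have d: "d \<ge> 0"
    unfolding d_def by (rule bergman_density_nonneg)
  have "\<delta> * (1 - s) \<le> 1 - s"
    using mult_right_mono[of \<delta> 1 "1 - s"] \<delta> True by simp
  then have \<rho>: "\<rho> > 0"
    using True unfolding \<rho>_def by linarith
  have summable: "summable (\<lambda>n. K * y n * (d * \<rho> ^ n))"
    using summable_mult[OF summable_y[of s], of "K * d"] True by (simp add: \<rho>_def mult_ac)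
  have "(\<Sum>m<N. ennreal (x m * (d * s ^ m))) = ennreal (d * (\<Sum>m<N. x m * s ^ m))"
    using x d True by (subst sum_ennreal) (auto simp: sum_distrib_left mult_ac)
  also have "\<dots> \<le> ennreal (d * (K * (\<Sum>n. y n * \<rho> ^ n)))"
    using H[of s N] True d unfolding \<rho>_def by (intro ennreal_leI mult_left_mono) auto
  also have "d * (K * (\<Sum>n. y n * \<rho> ^ n)) = (\<Sum>n. K * y n * (d * \<rho> ^ n))"
    using suminf_mult[OF summable_y[of s], of "d * K"] True by (simp add: \<rho>_def mult_ac)
  also have "ennreal \<dots> = (\<Sum>n. ennreal (K * y n * (d * \<rho> ^ n)))"
    using summable K y d \<rho> by (intro suminf_ennreal2[symmetric]) auto
  finally show ?thesis
    unfolding d_def \<rho>_def .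
next
  case False
  then show ?thesis
    by (simp add: bergman_density_def)
qed

lemma nn_integral_bergman_dilated_series_le:
  assumes \<beta>: "\<beta> > -1" and y: "\<And>n. y n \<ge> 0" and K: "K \<ge> 0" and \<delta>: "0 < \<delta>" "\<delta> \<le> 1"
    and summable_y: "summable (\<lambda>n. A2_weight \<beta> n * y n)"
  shows "(\<integral>\<^sup>+s. (\<Sum>n. ennreal (K * y n * (bergman_density \<beta> s * (1 - \<delta> * (1 - s)) ^ n))) \<partial>lborel)
           \<le> ennreal (K * \<delta> powr (- \<beta> - 1) / (\<beta> + 1) * (\<Sum>n. A2_weight \<beta> n * y n))"
proof -
  define c where "c = K * \<delta> powr (- \<beta> - 1) / (\<beta> + 1)"
  have c: "c \<ge> 0"
    using K \<beta> by (simp add: c_def)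
  have w: "A2_weight \<beta> n > 0" for n
    by (rule A2_weight_pos[OF \<beta>])
  have "(\<integral>\<^sup>+s. (\<Sum>n. ennreal (K * y n * (bergman_density \<beta> s * (1 - \<delta> * (1 - s)) ^ n))) \<partial>lborel)
          = (\<Sum>n. \<integral>\<^sup>+s. ennreal (K * y n) * ennreal (bergman_density \<beta> s * (1 - \<delta> * (1 - s)) ^ n) \<partial>lborel)"
    using K y by (subst nn_integral_suminf) (simp_all add: ennreal_mult')
  also have "\<dots> \<le> (\<Sum>n. ennreal (c * (A2_weight \<beta> n * y n)))"
  proof (rule suminf_le)
    fix n
    have "(\<integral>\<^sup>+s. ennreal (K * y n) * ennreal (bergman_density \<beta> s * (1 - \<delta> * (1 - s)) ^ n) \<partial>lborel)
            = ennreal (K * y n) * (\<integral>\<^sup>+s. ennreal (bergman_density \<beta> s * (1 - \<delta> * (1 - s)) ^ n) \<partial>lborel)"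
      by (rule nn_integral_cmult) measurable
    also have "\<dots> \<le> ennreal (K * y n) * (ennreal (\<delta> powr (- \<beta> - 1)) * ennreal (A2_weight \<beta> n / (\<beta> + 1)))"
      using nn_integral_bergman_density_dilated[OF \<delta>, of \<beta> n]
      by (intro mult_left_mono) (simp_all add: nn_integral_bergman_density_power[OF \<beta>])
    also have "\<dots> = ennreal (c * (A2_weight \<beta> n * y n))"
      using K y[of n] \<beta> w[of n] by (simp add: c_def ennreal_mult[symmetric] mult_ac)
    finally show "(\<integral>\<^sup>+s. ennreal (K * y n) * ennreal (bergman_density \<beta> s * (1 - \<delta> * (1 - s)) ^ n) \<partial>lborel)
                    \<le> ennreal (c * (A2_weight \<beta> n * y n))" .
  qed auto
  also have "\<dots> = ennreal (\<Sum>n. c * (A2_weight \<beta> n * y n))"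
    using c y w summable_mult[OF summable_y, of c] by (intro suminf_ennreal2) (auto simp: less_imp_le)
  also have "\<dots> = ennreal (c * (\<Sum>n. A2_weight \<beta> n * y n))"
    by (simp add: suminf_mult[OF summable_y])
  finally show ?thesis
    unfolding c_def .
qed

text \<open>Since A2_weight n / (\<beta> + 1) is the n-th moment of the density (1 - s)^\<beta> on (0, 1),
  integrating a bound for the power series \<Sum> x m s^m against this density bounds the weighted
  sum \<Sum> A2_weight m * x m.\<close>

lemma summable_A2_weight_transfer:
  assumes \<beta>: "\<beta> > -1" and x: "\<And>m. x m \<ge> 0" and y: "\<And>n. y n \<ge> 0"
    and summable_y: "summable (\<lambda>n. A2_weight \<beta> n * y n)"
    and \<delta>: "0 < \<delta>" "\<delta> \<le> 1" and K: "K \<ge> 0"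
    and summable_dilated: "\<And>s. 0 < s \<Longrightarrow> s < 1 \<Longrightarrow> summable (\<lambda>n. y n * (1 - \<delta> * (1 - s)) ^ n)"
    and H: "\<And>s M. 0 < s \<Longrightarrow> s < 1 \<Longrightarrow> (\<Sum>m<M. x m * s ^ m) \<le> K * (\<Sum>n. y n * (1 - \<delta> * (1 - s)) ^ n)"
  shows "summable (\<lambda>m. A2_weight \<beta> m * x m)"
proof -
  define B where "B = ennreal (\<beta> + 1) * ennreal (K * \<delta> powr (- \<beta> - 1) / (\<beta> + 1) * (\<Sum>n. A2_weight \<beta> n * y n))"
  have w: "A2_weight \<beta> m > 0" for m
    by (rule A2_weight_pos[OF \<beta>])
  have moment: "ennreal (A2_weight \<beta> m * x m)
                  = ennreal (\<beta> + 1) * (\<integral>\<^sup>+s. ennreal (x m * (bergman_density \<beta> s * s ^ m)) \<partial>lborel)" for m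
  proof -
    have "(\<integral>\<^sup>+s. ennreal (x m * (bergman_density \<beta> s * s ^ m)) \<partial>lborel)
            = ennreal (x m) * ennreal (A2_weight \<beta> m / (\<beta> + 1))"
      using x by (simp add: ennreal_mult' nn_integral_cmult nn_integral_bergman_density_power[OF \<beta>])
    then show ?thesis
      using \<beta> x[of m] w[of m] by (simp flip: ennreal_mult add: mult_ac)
  qed
  have "(\<Sum>m<N. ennreal (A2_weight \<beta> m * x m)) \<le> B" for N
  proof -
    have "(\<Sum>m<N. ennreal (A2_weight \<beta> m * x m))
            = ennreal (\<beta> + 1) * (\<integral>\<^sup>+s. (\<Sum>m<N. ennreal (x m * (bergman_density \<beta> s * s ^ m))) \<partial>lborel)"
      by (simp add: moment nn_integral_sum sum_distrib_left)
    also have "\<dots> \<le> ennreal (\<beta> + 1) * (\<integral>\<^sup>+s. (\<Sum>n. ennreal (K * y n * (bergman_density \<beta> s * (1 - \<delta> * (1 - s)) ^ n))) \<partial>lborel)"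
      using bergman_partial_sum_le[OF x y K \<delta>(2) summable_dilated H]
      by (intro mult_left_mono nn_integral_mono) auto
    also have "\<dots> \<le> B"
      unfolding B_def by (intro mult_left_mono nn_integral_bergman_dilated_series_le[OF \<beta> y K \<delta> summable_y]) simp
    finally show ?thesis .
  qed
  then have "(\<Sum>m. ennreal (A2_weight \<beta> m * x m)) \<le> B"
    using ennreal_suminf_bound_add[of "\<lambda>m. ennreal (A2_weight \<beta> m * x m)" 0 B] by simp
  moreover have "B < top"
    unfolding B_def by (simp add: ennreal_mult_less_top)
  ultimately have "(\<Sum>m. ennreal (A2_weight \<beta> m * x m)) \<noteq> top"
    by (metis neq_top_trans top.not_eq_extremum order_le_less_trans)
  then show ?thesis
    using x w by (intro summable_suminf_not_top) (simp_all add: less_imp_le)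
qed

lemma norm_comp_lt_dilated_radius:
  assumes hol: "\<phi> holomorphic_on ball 0 1" and maps: "\<phi> ` ball 0 1 \<subseteq> ball 0 1"
    and z: "norm z \<le> sqrt s" and s: "0 < s" "s < 1"
    and \<delta>: "0 < \<delta>" "\<delta> < (1 - (norm (\<phi> 0))\<^sup>2) / 4"
  shows "norm (\<phi> z) < sqrt (1 - \<delta> * (1 - s))"
proof -
  have "sqrt s < 1"
    using s by simp
  then have z1: "norm z < 1"
    using z by linarith
  have "(norm z)\<^sup>2 \<le> (sqrt s)\<^sup>2"
    using z by (intro power_mono) auto
  then have "(1 - (norm (\<phi> 0))\<^sup>2) / 4 * (1 - s) \<le> (1 - (norm (\<phi> 0))\<^sup>2) / 4 * (1 - (norm z)\<^sup>2)"
    using \<delta> s by (intro mult_left_mono) auto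
  also have "\<dots> \<le> 1 - (norm (\<phi> z))\<^sup>2"
    by (rule schwarz_pick_norm_bound[OF hol maps z1])
  finally have "(norm (\<phi> z))\<^sup>2 < 1 - \<delta> * (1 - s)"
    using \<delta> s mult_strict_right_mono[of \<delta> "(1 - (norm (\<phi> 0))\<^sup>2) / 4" "1 - s"] by linarith
  then show ?thesis
    by (simp add: real_less_rsqrt)
qed

lemma sum_div_diff_le:
  fixes a R m :: real
  assumes "0 \<le> a" "0 \<le> R" "R \<le> 1" "0 < m" "m \<le> R\<^sup>2 - a\<^sup>2"
  shows "(R + a) / (R - a) \<le> 4 / m"
proof -
  have "R - a > 0"
  proof (rule ccontr)
    assume "\<not> R - a > 0"
    then have "R * R \<le> a * a"
      using assms(2) by (intro mult_mono) auto
    then show False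
      using assms(4,5) by (simp add: power2_eq_square)
  qed
  have "m \<le> (R - a) * (R + a)"
    using assms(5) by (simp add: power2_eq_square algebra_simps)
  also have "\<dots> \<le> (R - a) * 2"
    using \<open>R - a > 0\<close> assms(1,3) by (intro mult_left_mono) auto
  finally have "m / 2 \<le> R - a" by simp
  have "(R + a) / (R - a) \<le> 2 / (R - a)"
    using \<open>R - a > 0\<close> assms(1,3) by (intro divide_right_mono) auto
  also have "\<dots> \<le> 2 / (m / 2)"
    using \<open>m / 2 \<le> R - a\<close> assms(4) by (intro divide_left_mono) auto
  finally show ?thesis by simp
qed

lemma A2_summable_dilated:
  assumes "\<beta> > -1" "a \<in> A2 \<beta>" "0 < \<rho>" "\<rho> < 1"
  shows "summable (\<lambda>n. (cmod (a n))\<^sup>2 * \<rho> ^ n)"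
proof -
  have "summable (\<lambda>n. (cmod (a n))\<^sup>2 * sqrt \<rho> ^ (2 * n))"
    by (rule sums_summable, rule as_fun_circle_parseval[OF assms(1,2)]) (use assms in auto)
  then show ?thesis
    using assms by (simp add: power_mult)
qed

text \<open>The radius R = sqrt (1 - \<kappa>/2 (1 - s)) is chosen so that Schwarz-Pick keeps \<phi> inside it
  on the circle of radius sqrt s, while R^2 - |\<phi> 0|^2 \<ge> 2\<kappa> bounds the Poisson factor by 2/\<kappa>.\<close>

lemma comp_op_dilated_bound:
  assumes b: "\<beta> > -1" and a: "a \<in> A2 \<beta>"
    and hol\<phi>: "\<phi> holomorphic_on ball 0 1" and maps: "\<phi> ` ball 0 1 \<subseteq> ball 0 1"
    and s: "0 < s" "s < 1"
  defines "\<kappa> \<equiv> (1 - (cmod (\<phi> 0))\<^sup>2) / 4"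
  shows "(\<Sum>m<M. (cmod (comp_op \<phi> a m))\<^sup>2 * s ^ m) \<le> 2 / \<kappa> * (\<Sum>n. (cmod (a n))\<^sup>2 * (1 - \<kappa> / 2 * (1 - s)) ^ n)"
proof -
  define R where "R = sqrt (1 - \<kappa> / 2 * (1 - s))"
  have "cmod (\<phi> 0) < 1"
    using maps by (auto simp: image_subset_iff)
  then have \<kappa>: "0 < \<kappa>" "\<kappa> \<le> 1 / 4" "(cmod (\<phi> 0))\<^sup>2 = 1 - 4 * \<kappa>"
    unfolding \<kappa>_def by (simp_all add: abs_square_less_1 field_simps)
  have "\<kappa> / 2 * (1 - s) \<le> \<kappa> / 2" "0 < \<kappa> / 2 * (1 - s)"
    using \<kappa> s by (auto intro: mult_left_le)
  then have \<rho>: "0 < 1 - \<kappa> / 2 * (1 - s)" "1 - \<kappa> / 2 * (1 - s) < 1"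
    using \<kappa> by linarith+
  then have R: "0 < R" "R < 1" "R\<^sup>2 = 1 - \<kappa> / 2 * (1 - s)"
    by (simp_all add: R_def)
  have "2 * \<kappa> \<le> 4 * \<kappa> - \<kappa> / 2"
    using \<kappa>(1) by simp
  also have "\<dots> \<le> 4 * \<kappa> - \<kappa> / 2 * (1 - s)"
    using \<open>\<kappa> / 2 * (1 - s) \<le> \<kappa> / 2\<close> by simp
  also have "\<dots> = R\<^sup>2 - (cmod (\<phi> 0))\<^sup>2"
    by (simp add: R(3) \<kappa>(3))
  finally have "2 * \<kappa> \<le> R\<^sup>2 - (cmod (\<phi> 0))\<^sup>2" .
  have "(R + cmod (\<phi> 0)) / (R - cmod (\<phi> 0)) \<le> 4 / (2 * \<kappa>)"
    by (rule sum_div_diff_le) (use R \<kappa> \<open>2 * \<kappa> \<le> R\<^sup>2 - (cmod (\<phi> 0))\<^sup>2\<close> in auto)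
  then have ratio: "(R + cmod (\<phi> 0)) / (R - cmod (\<phi> 0)) \<le> 2 / \<kappa>"
    by simp
  have "(\<Sum>m<M. (cmod (comp_op \<phi> a m))\<^sup>2 * sqrt s ^ (2 * m))
          \<le> (R + cmod (\<phi> 0)) / (R - cmod (\<phi> 0)) * (\<Sum>n. (cmod (a n))\<^sup>2 * R ^ (2 * n))"
  proof (rule comp_op_circle_bound[OF b a hol\<phi> maps])
    have "0 < \<kappa> / 2" "\<kappa> / 2 < (1 - (norm (\<phi> 0))\<^sup>2) / 4"
      using \<kappa>(1) unfolding \<kappa>_def by simp_all
    from norm_comp_lt_dilated_radius[OF hol\<phi> maps _ s this]
    show "norm (\<phi> z) < R" if "norm z \<le> sqrt s" for z
      unfolding R_def using that .
  qed (use s R in auto)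
  then have "(\<Sum>m<M. (cmod (comp_op \<phi> a m))\<^sup>2 * s ^ m)
               \<le> (R + cmod (\<phi> 0)) / (R - cmod (\<phi> 0)) * (\<Sum>n. (cmod (a n))\<^sup>2 * (1 - \<kappa> / 2 * (1 - s)) ^ n)"
    using s R(3) by (simp add: power_mult)
  also have "\<dots> \<le> 2 / \<kappa> * (\<Sum>n. (cmod (a n))\<^sup>2 * (1 - \<kappa> / 2 * (1 - s)) ^ n)"
    using \<rho> by (intro mult_right_mono[OF ratio] suminf_nonneg A2_summable_dilated[OF b a]) auto
  finally show ?thesis .
qed

theorem comp_op_in_A2:
  assumes b: "\<beta> > -1" and a: "a \<in> A2 \<beta>"
    and hol\<phi>: "\<phi> holomorphic_on ball 0 1" and maps: "\<phi> ` ball 0 1 \<subseteq> ball 0 1"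
  shows "comp_op \<phi> a \<in> A2 \<beta>"
proof -
  define \<kappa> where "\<kappa> = (1 - (cmod (\<phi> 0))\<^sup>2) / 4"
  have "cmod (\<phi> 0) < 1"
    using maps by (auto simp: image_subset_iff)
  then have \<kappa>: "0 < \<kappa>" "\<kappa> \<le> 1 / 4"
    unfolding \<kappa>_def by (simp_all add: abs_square_less_1)
  have "summable (\<lambda>m. A2_weight \<beta> m * (cmod (comp_op \<phi> a m))\<^sup>2)"
  proof (rule summable_A2_weight_transfer[where \<delta> = "\<kappa> / 2" and K = "2 / \<kappa>", OF b])
    show "summable (\<lambda>n. A2_weight \<beta> n * (cmod (a n))\<^sup>2)"
      using a unfolding A2_def by simp
    show "summable (\<lambda>n. (cmod (a n))\<^sup>2 * (1 - \<kappa> / 2 * (1 - s)) ^ n)" if "0 < s" "s < 1" for s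
    proof (rule A2_summable_dilated[OF b a])
      have "\<kappa> / 2 * (1 - s) \<le> \<kappa> / 2" "0 < \<kappa> / 2 * (1 - s)"
        using \<kappa> that by (auto intro: mult_left_le)
      then show "0 < 1 - \<kappa> / 2 * (1 - s)" "1 - \<kappa> / 2 * (1 - s) < 1"
        using \<kappa> by linarith+
    qed
    show "(\<Sum>m<M. (cmod (comp_op \<phi> a m))\<^sup>2 * s ^ m) \<le> 2 / \<kappa> * (\<Sum>n. (cmod (a n))\<^sup>2 * (1 - \<kappa> / 2 * (1 - s)) ^ n)"
      if "0 < s" "s < 1" for s M
      unfolding \<kappa>_def by (rule comp_op_dilated_bound[OF b a hol\<phi> maps that])
  qed (use \<kappa> in auto)
  then show ?thesis
    unfolding A2_def by simp
qed

section \<open>Hilbert space structure of A^2_beta\<close>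

context
  fixes \<beta> :: real
  assumes \<beta>: "\<beta> > -1"
begin

lemma A2_add:
  assumes "u \<in> A2 \<beta>" "v \<in> A2 \<beta>"
  shows "(\<lambda>n. u n + v n) \<in> A2 \<beta>"
  unfolding A2_def mem_Collect_eq
proof (rule summable_comparison_test')
  show "summable (\<lambda>n. 2 * (A2_weight \<beta> n * (cmod (u n))\<^sup>2) + 2 * (A2_weight \<beta> n * (cmod (v n))\<^sup>2))"
    using assms unfolding A2_def by (intro summable_add summable_mult) auto
  fix n
  have "(cmod (u n + v n))\<^sup>2 \<le> (cmod (u n) + cmod (v n))\<^sup>2"
    by (intro power_mono norm_triangle_ineq) auto
  also have "\<dots> \<le> 2 * (cmod (u n))\<^sup>2 + 2 * (cmod (v n))\<^sup>2"
    using sum_squares_bound[of "cmod (u n)" "cmod (v n)"] by (simp add: power2_sum)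
  finally have "A2_weight \<beta> n * (cmod (u n + v n))\<^sup>2
                  \<le> A2_weight \<beta> n * (2 * (cmod (u n))\<^sup>2 + 2 * (cmod (v n))\<^sup>2)"
    using A2_weight_pos[OF \<beta>, of n] by (intro mult_left_mono) auto
  then show "norm (A2_weight \<beta> n * (cmod (u n + v n))\<^sup>2)
               \<le> 2 * (A2_weight \<beta> n * (cmod (u n))\<^sup>2) + 2 * (A2_weight \<beta> n * (cmod (v n))\<^sup>2)"
    using A2_weight_pos[OF \<beta>, of n] by (simp add: algebra_simps)
qed

lemma A2_cmult: "u \<in> A2 \<beta> \<Longrightarrow> (\<lambda>n. c * u n) \<in> A2 \<beta>"
  unfolding A2_def
  using summable_mult[of "\<lambda>n. A2_weight \<beta> n * (cmod (u n))\<^sup>2" "(cmod c)\<^sup>2"]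
  by (simp add: norm_mult power_mult_distrib mult.left_commute)

lemma A2_diff: "u \<in> A2 \<beta> \<Longrightarrow> v \<in> A2 \<beta> \<Longrightarrow> (\<lambda>n. u n - v n) \<in> A2 \<beta>"
  using A2_add[of u "\<lambda>n. (-1) * v n"] A2_cmult[of v "-1"] by simp

lemma A2_inner_terms_bound:
  "2 * norm (complex_of_real (A2_weight \<beta> n) * u n * cnj (v n))
     \<le> A2_weight \<beta> n * (cmod (u n))\<^sup>2 + A2_weight \<beta> n * (cmod (v n))\<^sup>2"
proof -
  have "2 * (cmod (u n) * cmod (v n)) \<le> (cmod (u n))\<^sup>2 + (cmod (v n))\<^sup>2"
    using sum_squares_bound[of "cmod (u n)" "cmod (v n)"] by (simp only: mult.assoc)
  from mult_left_mono[OF this, of "A2_weight \<beta> n"] A2_weight_pos[OF \<beta>, of n] show ?thesis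
    by (simp add: norm_mult algebra_simps)
qed

lemma A2_inner_summable_norm:
  assumes "u \<in> A2 \<beta>" "v \<in> A2 \<beta>"
  shows "summable (\<lambda>n. norm (complex_of_real (A2_weight \<beta> n) * u n * cnj (v n)))"
proof (rule summable_comparison_test')
  show "summable (\<lambda>n. (A2_weight \<beta> n * (cmod (u n))\<^sup>2 + A2_weight \<beta> n * (cmod (v n))\<^sup>2) / 2)"
    using assms unfolding A2_def by (intro summable_divide summable_add) auto
  show "norm (norm (complex_of_real (A2_weight \<beta> n) * u n * cnj (v n)))
          \<le> (A2_weight \<beta> n * (cmod (u n))\<^sup>2 + A2_weight \<beta> n * (cmod (v n))\<^sup>2) / 2" for n
    using A2_inner_terms_bound[of n u v] by simp
qed

lemma A2_inner_summable:
  "u \<in> A2 \<beta> \<Longrightarrow> v \<in> A2 \<beta> \<Longrightarrow> summable (\<lambda>n. complex_of_real (A2_weight \<beta> n) * u n * cnj (v n))"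
  by (rule summable_norm_cancel) (rule A2_inner_summable_norm)

lemma A2_norm_sq: "u \<in> A2 \<beta> \<Longrightarrow> (A2_norm \<beta> u)\<^sup>2 = (\<Sum>n. A2_weight \<beta> n * (cmod (u n))\<^sup>2)"
  unfolding A2_norm_def A2_def using A2_weight_pos[OF \<beta>]
  by (simp add: less_imp_le suminf_nonneg)

lemma A2_norm_nonneg: "u \<in> A2 \<beta> \<Longrightarrow> 0 \<le> A2_norm \<beta> u"
  unfolding A2_norm_def A2_def using A2_weight_pos[OF \<beta>]
  by (simp add: less_imp_le suminf_nonneg)

lemma A2_inner_self:
  assumes "u \<in> A2 \<beta>"
  shows "A2_inner \<beta> u u = of_real ((A2_norm \<beta> u)\<^sup>2)"
proof -
  have "(\<lambda>n. complex_of_real (A2_weight \<beta> n) * u n * cnj (u n)) = (\<lambda>n. of_real (A2_weight \<beta> n * (cmod (u n))\<^sup>2))"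
    by (simp only: mult.assoc complex_norm_square of_real_mult)
  with assms show ?thesis
    unfolding A2_inner_def A2_norm_sq[OF assms] A2_def by (simp add: suminf_of_real)
qed

lemma A2_norm_eq_0_imp_zero:
  assumes "u \<in> A2 \<beta>" "A2_norm \<beta> u = 0"
  shows "u = (\<lambda>n. 0)"
proof
  fix n
  have summable: "summable (\<lambda>n. A2_weight \<beta> n * (cmod (u n))\<^sup>2)"
    using assms(1) by (simp add: A2_def)
  have nonneg: "\<And>n. 0 \<le> A2_weight \<beta> n * (cmod (u n))\<^sup>2"
    using A2_weight_pos[OF \<beta>] by (simp add: less_imp_le)
  have "(\<Sum>n. A2_weight \<beta> n * (cmod (u n))\<^sup>2) = 0"
    using A2_norm_sq[OF assms(1)] assms(2) by simp
  then have "\<forall>n. A2_weight \<beta> n * (cmod (u n))\<^sup>2 = 0"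
    unfolding suminf_eq_zero_iff[OF summable nonneg] .
  then have "A2_weight \<beta> n * (cmod (u n))\<^sup>2 = 0" ..
  then show "u n = 0"
    using A2_weight_pos[OF \<beta>, of n] by simp
qed

lemma A2_inner_norm_bound:
  assumes "u \<in> A2 \<beta>" "v \<in> A2 \<beta>"
  shows "2 * cmod (A2_inner \<beta> u v) \<le> (A2_norm \<beta> u)\<^sup>2 + (A2_norm \<beta> v)\<^sup>2"
proof -
  have "2 * cmod (A2_inner \<beta> u v) \<le> 2 * (\<Sum>n. norm (complex_of_real (A2_weight \<beta> n) * u n * cnj (v n)))"
    unfolding A2_inner_def using summable_norm[OF A2_inner_summable_norm[OF assms]] by simp
  also have "\<dots> = (\<Sum>n. 2 * norm (complex_of_real (A2_weight \<beta> n) * u n * cnj (v n)))"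
    using A2_inner_summable_norm[OF assms] by (simp add: suminf_mult)
  also have "\<dots> \<le> (\<Sum>n. A2_weight \<beta> n * (cmod (u n))\<^sup>2 + A2_weight \<beta> n * (cmod (v n))\<^sup>2)"
    using assms A2_inner_summable_norm[OF assms] A2_inner_terms_bound unfolding A2_def
    by (intro suminf_le summable_mult summable_add) auto
  also have "\<dots> = (A2_norm \<beta> u)\<^sup>2 + (A2_norm \<beta> v)\<^sup>2"
    using assms unfolding A2_norm_sq[OF assms(1)] A2_norm_sq[OF assms(2)] A2_def by (simp add: suminf_add)
  finally show ?thesis .
qed

lemma A2_inner_add_right:
  "x \<in> A2 \<beta> \<Longrightarrow> u \<in> A2 \<beta> \<Longrightarrow> v \<in> A2 \<beta> \<Longrightarrow>
     A2_inner \<beta> x (\<lambda>n. u n + v n) = A2_inner \<beta> x u + A2_inner \<beta> x v"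
  unfolding A2_inner_def by (simp add: distrib_left suminf_add A2_inner_summable)

lemma A2_inner_diff_right:
  "x \<in> A2 \<beta> \<Longrightarrow> u \<in> A2 \<beta> \<Longrightarrow> v \<in> A2 \<beta> \<Longrightarrow>
     A2_inner \<beta> x (\<lambda>n. u n - v n) = A2_inner \<beta> x u - A2_inner \<beta> x v"
  unfolding A2_inner_def by (simp add: right_diff_distrib suminf_diff A2_inner_summable)

lemma A2_inner_diff_left:
  assumes "u \<in> A2 \<beta>" "v \<in> A2 \<beta>" "x \<in> A2 \<beta>"
  shows "A2_inner \<beta> (\<lambda>n. u n - v n) x = A2_inner \<beta> u x - A2_inner \<beta> v x"
proof -
  have "(\<lambda>n. complex_of_real (A2_weight \<beta> n) * (u n - v n) * cnj (x n)) =
        (\<lambda>n. complex_of_real (A2_weight \<beta> n) * u n * cnj (x n) - complex_of_real (A2_weight \<beta> n) * v n * cnj (x n))"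
    by (simp add: fun_eq_iff algebra_simps)
  then show ?thesis
    unfolding A2_inner_def by (simp add: suminf_diff A2_inner_summable assms)
qed

lemma A2_inner_cmult_left:
  assumes "u \<in> A2 \<beta>" "x \<in> A2 \<beta>"
  shows "A2_inner \<beta> (\<lambda>n. c * u n) x = c * A2_inner \<beta> u x"
  unfolding A2_inner_def using suminf_mult[OF A2_inner_summable[OF assms], of c]
  by (simp add: mult_ac)

end

section \<open>Invariant functionals and hypercyclicity\<close>

lemma A2_adjoint_eqI:
  assumes "\<beta> > -1" "h \<in> A2 \<beta>" "\<forall>g\<in>A2 \<beta>. A2_inner \<beta> h g = A2_inner \<beta> y (T g)"
  shows "A2_adjoint \<beta> T y = h"
  unfolding A2_adjoint_def
proof (rule the_equality)
  fix h' assume h': "h' \<in> A2 \<beta> \<and> (\<forall>g\<in>A2 \<beta>. A2_inner \<beta> h' g = A2_inner \<beta> y (T g))"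
  define d where "d = (\<lambda>n. h' n - h n)"
  have d: "d \<in> A2 \<beta>"
    unfolding d_def using A2_diff[OF assms(1)] h' assms(2) by blast
  have "of_real ((A2_norm \<beta> d)\<^sup>2) = A2_inner \<beta> h' d - A2_inner \<beta> h d"
    using A2_inner_self[OF assms(1) d] A2_inner_diff_left[OF assms(1) _ assms(2) d] h'
    unfolding d_def by simp
  also have "\<dots> = 0"
    using h' assms(3) d by simp
  finally have "d = (\<lambda>n. 0)"
    using A2_norm_eq_0_imp_zero[OF assms(1) d] by simp
  then show "h' = h"
    unfolding d_def by (simp add: fun_eq_iff)
qed (use assms in simp)

text \<open>Since the adjoint is defined by a definite description, a fixed point of it need not
  satisfy the adjoint relation: it could be the junk value of a vector without adjoint image.
  If x and 2x are both fixed, this is excluded, since otherwise neither has an adjoint image,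
  both descriptions range over the same empty property, and x = 2x.\<close>

lemma A2_adjoint_fixed_vector:
  assumes \<beta>: "\<beta> > -1" and T: "T ` A2 \<beta> \<subseteq> A2 \<beta>"
    and x: "x \<in> A2 \<beta>" "x \<noteq> (\<lambda>n. 0)"
    and fixed: "A2_adjoint \<beta> T x = x" "A2_adjoint \<beta> T (\<lambda>n. 2 * x n) = (\<lambda>n. 2 * x n)"
  shows "\<forall>g\<in>A2 \<beta>. A2_inner \<beta> x (T g) = A2_inner \<beta> x g"
proof -
  define adj where "adj y h \<longleftrightarrow> h \<in> A2 \<beta> \<and> (\<forall>g\<in>A2 \<beta>. A2_inner \<beta> h g = A2_inner \<beta> y (T g))" for y h
  have "\<exists>h. adj x h"
  proof (rule ccontr)
    assume none: "\<nexists>h. adj x h"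
    have "\<nexists>h. adj (\<lambda>n. 2 * x n) h"
    proof
      assume "\<exists>h. adj (\<lambda>n. 2 * x n) h"
      then obtain h where h: "adj (\<lambda>n. 2 * x n) h" by blast
      then have h_A2: "h \<in> A2 \<beta>" and h_adj: "\<forall>g\<in>A2 \<beta>. A2_inner \<beta> h g = A2_inner \<beta> (\<lambda>n. 2 * x n) (T g)"
        unfolding adj_def by auto
      have "adj x (\<lambda>n. (1 / 2) * h n)"
        unfolding adj_def
      proof (intro conjI ballI)
        show "(\<lambda>n. (1 / 2) * h n) \<in> A2 \<beta>"
          by (rule A2_cmult[OF \<beta> h_A2])
        fix g assume g: "g \<in> A2 \<beta>"
        have "A2_inner \<beta> (\<lambda>n. (1 / 2) * h n) g = (1 / 2) * A2_inner \<beta> h g"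
          by (rule A2_inner_cmult_left[OF \<beta> h_A2 g])
        also have "A2_inner \<beta> h g = A2_inner \<beta> (\<lambda>n. 2 * x n) (T g)"
          using h_adj g by blast
        also have "\<dots> = 2 * A2_inner \<beta> x (T g)"
          by (rule A2_inner_cmult_left[OF \<beta> x(1) imageI[THEN subsetD[OF T], OF g]])
        finally show "A2_inner \<beta> (\<lambda>n. (1 / 2) * h n) g = A2_inner \<beta> x (T g)"
          by simp
      qed
      with none show False by blast
    qed
    with none have "A2_adjoint \<beta> T x = A2_adjoint \<beta> T (\<lambda>n. 2 * x n)"
      unfolding A2_adjoint_def adj_def[symmetric] by metis
    then have "x = (\<lambda>n. 2 * x n)"
      using fixed by simp
    with x(2) show False
      by (auto simp: fun_eq_iff)
  qed
  then obtain h where "adj x h" by blast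
  with fixed(1) have "A2_adjoint \<beta> T x = h"
    unfolding adj_def by (intro A2_adjoint_eqI[OF \<beta>]) auto
  with \<open>adj x h\<close> fixed(1) show ?thesis
    unfolding adj_def by simp
qed

text \<open>An orbit on which the functional g \<mapsto> \<langle>x, g\<rangle> is constant stays at distance at least
  \<parallel>x\<parallel> from f + x.\<close>

lemma not_A2_hypercyclic_if_invariant_functional:
  assumes \<beta>: "\<beta> > -1" and T: "T ` A2 \<beta> \<subseteq> A2 \<beta>"
    and x: "x \<in> A2 \<beta>" "x \<noteq> (\<lambda>n. 0)"
    and invariant: "\<forall>g\<in>A2 \<beta>. A2_inner \<beta> x (T g) = A2_inner \<beta> x g"
  shows "\<not> A2_hypercyclic \<beta> T"
proof
  assume "A2_hypercyclic \<beta> T"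
  then obtain f where f: "f \<in> A2 \<beta>"
    and dense: "\<And>g e. g \<in> A2 \<beta> \<Longrightarrow> e > 0 \<Longrightarrow> \<exists>n. A2_norm \<beta> (\<lambda>k. (T ^^ n) f k - g k) < e"
    unfolding A2_hypercyclic_def by blast
  have orbit: "(T ^^ n) f \<in> A2 \<beta>" for n
    by (induction n) (use f T in auto)
  have orbit_inner: "A2_inner \<beta> x ((T ^^ n) f) = A2_inner \<beta> x f" for n
    by (induction n) (simp_all add: invariant orbit)
  have "A2_norm \<beta> x > 0"
    using A2_norm_eq_0_imp_zero[OF \<beta> x(1)] A2_norm_nonneg[OF \<beta> x(1)] x(2) by fastforce
  moreover have "(\<lambda>k. f k + x k) \<in> A2 \<beta>"
    by (rule A2_add[OF \<beta> f x(1)])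
  ultimately obtain n where n: "A2_norm \<beta> (\<lambda>k. (T ^^ n) f k - (f k + x k)) < A2_norm \<beta> x"
    using dense by blast
  define v where "v = (\<lambda>k. (T ^^ n) f k - (f k + x k))"
  have v: "v \<in> A2 \<beta>"
    unfolding v_def by (intro A2_diff[OF \<beta> orbit] A2_add[OF \<beta> f x(1)])
  have "A2_inner \<beta> x v = - A2_inner \<beta> x x"
    unfolding v_def using orbit_inner[of n]
    by (simp add: A2_inner_diff_right[OF \<beta> x(1) orbit A2_add[OF \<beta> f x(1)]] A2_inner_add_right[OF \<beta> x(1) f x(1)])
  then have "cmod (A2_inner \<beta> x v) = (A2_norm \<beta> x)\<^sup>2"
    by (simp add: A2_inner_self[OF \<beta> x(1)] norm_power)
  with A2_inner_norm_bound[OF \<beta> x(1) v] have "(A2_norm \<beta> x)\<^sup>2 \<le> (A2_norm \<beta> v)\<^sup>2"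
    by simp
  then have "A2_norm \<beta> x \<le> A2_norm \<beta> v"
    using A2_norm_nonneg[OF \<beta> v] by (rule power2_le_imp_le)
  with n show False
    unfolding v_def by simp
qed

lemma A2_conjugation_diff:
  assumes "\<beta> > -1" "A2_conjugation \<beta> C" "u \<in> A2 \<beta>" "v \<in> A2 \<beta>"
  shows "C (\<lambda>n. u n - v n) = (\<lambda>n. C u n - C v n)"
proof -
  have add: "\<forall>f\<in>A2 \<beta>. \<forall>g\<in>A2 \<beta>. C (\<lambda>n. f n + g n) = (\<lambda>n. C f n + C g n)"
    and cmult: "\<forall>c. \<forall>f\<in>A2 \<beta>. C (\<lambda>n. c * f n) = (\<lambda>n. cnj c * C f n)"
    using assms(2) unfolding A2_conjugation_def by blast+
  have "C (\<lambda>n. u n + (- 1) * v n) = (\<lambda>n. C u n + C (\<lambda>n. (- 1) * v n) n)"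
    using add[rule_format, OF assms(3) A2_cmult[OF assms(1,4), of "- 1"]] .
  also have "C (\<lambda>n. (- 1) * v n) = (\<lambda>n. cnj (- 1) * C v n)"
    using cmult[rule_format, OF assms(4)] .
  finally show ?thesis by simp
qed

lemma A2_conjugation_norm:
  assumes \<beta>: "\<beta> > -1" and C: "A2_conjugation \<beta> C" and u: "u \<in> A2 \<beta>"
  shows "A2_norm \<beta> (C u) = A2_norm \<beta> u"
proof -
  have Cu: "C u \<in> A2 \<beta>" and "A2_inner \<beta> (C u) (C u) = A2_inner \<beta> u u"
    using C u unfolding A2_conjugation_def by blast+
  then have "(A2_norm \<beta> (C u))\<^sup>2 = (A2_norm \<beta> u)\<^sup>2"
    by (simp only: A2_inner_self[OF \<beta> Cu] A2_inner_self[OF \<beta> u] of_real_eq_iff)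
  then show ?thesis
    using A2_norm_nonneg[OF \<beta> Cu] A2_norm_nonneg[OF \<beta> u] by (rule power2_eq_imp_eq)
qed

lemma A2_conjugation_nonzero:
  assumes "\<beta> > -1" "A2_conjugation \<beta> C" "u \<in> A2 \<beta>" "u \<noteq> (\<lambda>n. 0)"
  shows "C u \<noteq> (\<lambda>n. 0)"
  using A2_conjugation_norm[OF assms(1-3)] A2_norm_eq_0_imp_zero[OF assms(1,3)] assms(4)
  by (auto simp: A2_norm_def)

lemma A2_hypercyclic_conjugation:
  assumes \<beta>: "\<beta> > -1" and C: "A2_conjugation \<beta> C" and T: "T ` A2 \<beta> \<subseteq> A2 \<beta>"
    and intertwine: "\<And>f. f \<in> A2 \<beta> \<Longrightarrow> C (T f) = S (C f)"
    and "A2_hypercyclic \<beta> S"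
  shows "A2_hypercyclic \<beta> T"
proof -
  have C_A2: "\<And>f. f \<in> A2 \<beta> \<Longrightarrow> C f \<in> A2 \<beta>" and C_invol: "\<And>f. f \<in> A2 \<beta> \<Longrightarrow> C (C f) = f"
    using C unfolding A2_conjugation_def by auto
  obtain f where f: "f \<in> A2 \<beta>"
    and dense: "\<And>g e. g \<in> A2 \<beta> \<Longrightarrow> e > 0 \<Longrightarrow> \<exists>n. A2_norm \<beta> (\<lambda>k. (S ^^ n) f k - g k) < e"
    using assms(5) unfolding A2_hypercyclic_def by blast
  have orbit: "(T ^^ n) (C f) \<in> A2 \<beta>" for n
    by (induction n) (use C_A2 f T in auto)
  have S_orbit: "(S ^^ n) f = C ((T ^^ n) (C f))" for n
  proof (induction n)
    case 0 show ?case using C_invol[OF f] by simp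
  next
    case (Suc n)
    then show ?case
      using intertwine[OF orbit[of n]] C_invol[OF orbit[of n]] by simp
  qed
  show ?thesis
    unfolding A2_hypercyclic_def
  proof (intro bexI ballI allI impI)
    fix g :: "nat \<Rightarrow> complex" and e :: real
    assume g: "g \<in> A2 \<beta>" and e: "e > 0"
    obtain n where "A2_norm \<beta> (\<lambda>k. (S ^^ n) f k - C g k) < e"
      using dense[OF C_A2[OF g] e] by blast
    moreover have "(\<lambda>k. (S ^^ n) f k - C g k) = C (\<lambda>k. (T ^^ n) (C f) k - g k)"
      unfolding S_orbit using A2_conjugation_diff[OF \<beta> C orbit g] by simp
    ultimately show "\<exists>n. A2_norm \<beta> (\<lambda>k. (T ^^ n) (C f) k - g k) < e"
      using A2_conjugation_norm[OF \<beta> C A2_diff[OF \<beta> orbit g]] by auto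
  qed (rule C_A2[OF f])
qed

lemma constant_in_A2: "(\<lambda>n. if n = 0 then c else 0) \<in> A2 \<beta>"
proof -
  have "(\<lambda>n. A2_weight \<beta> n * (cmod (if n = 0 then c else 0))\<^sup>2)
          = (\<lambda>n. if n = 0 then A2_weight \<beta> n * (cmod c)\<^sup>2 else 0)"
    by (auto simp: fun_eq_iff)
  then show ?thesis
    unfolding A2_def using summable_single[of 0 "\<lambda>n. A2_weight \<beta> n * (cmod c)\<^sup>2"] by simp
qed

lemma deriv_funpow_const: "(deriv ^^ n) (\<lambda>z. c) = (if n = 0 then (\<lambda>z. c) else (\<lambda>z::complex. 0))"
  by (induction n) auto

lemma comp_op_constant: "comp_op \<phi> (\<lambda>n. if n = 0 then c else 0) = (\<lambda>n. if n = 0 then c else 0)"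
proof -
  have "as_fun (\<lambda>n. if n = 0 then c else 0) z = c" for z
  proof -
    have "(\<lambda>n. (if n = 0 then c else 0) * z ^ n) = (\<lambda>n. if n = 0 then c else 0)"
      by (auto simp: fun_eq_iff)
    then show ?thesis
      unfolding as_fun_def using sums_single[of 0 "\<lambda>_. c"] by (simp add: sums_iff)
  qed
  then show ?thesis
    unfolding comp_op_def taylor_coeffs_def by (auto simp: fun_eq_iff deriv_funpow_const)
qed

lemma A2_complex_symmetric_invariant_functional:
  assumes \<beta>: "\<beta> > -1" and C: "A2_conjugation \<beta> C" and T: "T ` A2 \<beta> \<subseteq> A2 \<beta>"
    and intertwine: "\<And>f. f \<in> A2 \<beta> \<Longrightarrow> C (T f) = A2_adjoint \<beta> T (C f)"
    and e: "e \<in> A2 \<beta>" "e \<noteq> (\<lambda>n. 0)" "T e = e" "T (\<lambda>n. 2 * e n) = (\<lambda>n. 2 * e n)"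
  shows "\<forall>g\<in>A2 \<beta>. A2_inner \<beta> (C e) (T g) = A2_inner \<beta> (C e) g"
proof (rule A2_adjoint_fixed_vector[OF \<beta> T])
  show "C e \<in> A2 \<beta>"
    using C e(1) unfolding A2_conjugation_def by blast
  show "C e \<noteq> (\<lambda>n. 0)"
    by (rule A2_conjugation_nonzero[OF \<beta> C e(1,2)])
  show "A2_adjoint \<beta> T (C e) = C e"
    using intertwine[OF e(1)] e(3) by simp
  have "C (\<lambda>n. 2 * e n) = (\<lambda>n. 2 * C e n)"
    using C e(1) unfolding A2_conjugation_def by auto
  then show "A2_adjoint \<beta> T (\<lambda>n. 2 * C e n) = (\<lambda>n. 2 * C e n)"
    using intertwine[OF A2_cmult[OF \<beta> e(1), of 2]] e(4) by simp
qed

theorem proposition3p2: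
  fixes \<beta> :: real and \<phi> :: "complex \<Rightarrow> complex"
  assumes "\<beta> > -1"
    and "\<phi> holomorphic_on ball 0 1" and "\<phi> ` ball 0 1 \<subseteq> ball 0 1"
    and "A2_complex_symmetric \<beta> (comp_op \<phi>)"
  shows "\<not> A2_hypercyclic \<beta> (comp_op \<phi>) \<and> \<not> A2_hypercyclic \<beta> (A2_adjoint \<beta> (comp_op \<phi>))"
proof -
  define T where "T = comp_op \<phi>"
  obtain C where C: "A2_conjugation \<beta> C"
    and intertwine: "\<And>f. f \<in> A2 \<beta> \<Longrightarrow> C (T f) = A2_adjoint \<beta> T (C f)"
    using assms(4) unfolding A2_complex_symmetric_def T_def by blast
  have T_A2: "T ` A2 \<beta> \<subseteq> A2 \<beta>"
    unfolding T_def using comp_op_in_A2 assms(1-3) by blast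
  define e :: "nat \<Rightarrow> complex" where "e = (\<lambda>n. if n = 0 then 1 else 0)"
  have "(\<lambda>n. 2 * e n) = (\<lambda>n. if n = 0 then 2 else 0)"
    by (simp add: e_def fun_eq_iff)
  then have e: "e \<in> A2 \<beta>" "e \<noteq> (\<lambda>n. 0)" "T e = e" "T (\<lambda>n. 2 * e n) = (\<lambda>n. 2 * e n)"
    by (auto simp: e_def T_def fun_eq_iff constant_in_A2 comp_op_constant)
  have Ce: "C e \<in> A2 \<beta>" "C e \<noteq> (\<lambda>n. 0)"
    using C e A2_conjugation_nonzero[OF assms(1) C] unfolding A2_conjugation_def by auto
  have "\<forall>g\<in>A2 \<beta>. A2_inner \<beta> (C e) (T g) = A2_inner \<beta> (C e) g"
    by (rule A2_complex_symmetric_invariant_functional[OF assms(1) C T_A2 intertwine e])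
  then have "\<not> A2_hypercyclic \<beta> T"
    by (rule not_A2_hypercyclic_if_invariant_functional[OF assms(1) T_A2 Ce])
  moreover have "\<not> A2_hypercyclic \<beta> (A2_adjoint \<beta> T)"
    using A2_hypercyclic_conjugation[OF assms(1) C T_A2 intertwine] calculation by blast
  ultimately show ?thesis
    unfolding T_def ..
qed
end
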